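(* Consider the generalized trimmed lasso problem $\min_{x_0,\ldots,x_L} f(x_0,\ldots,x_L)+\sum_{l=1}^L\gamma_lT_{K_l,m_l,p_l}(D_lx_l-c_l)$, and suppose that for each $l\in[L]$ a point $\overline{x}_l$ with $D_l\overline{x}_l=c_l$ is given. (a) If $f(x_0,\ldots,x_L)=\frac12\|b-\sum_{l=0}^LA_lx_l\|_2^2$ with $b\in\mathbb{R}^q$, $A_l\in\mathbb{R}^{q\times n_l}$, then every d-stationary point $(x_0^*,\ldots,x_L^* )$ satisfies $T_{K_l,m_l,p_l}(D_lx_l^*-c_l)=0$ for all $l\in[L]$ provided that for all $l\in[L]$ $$\gamma_l>\frac{1}{\sigma_{K_l,m_l,p_l}(D_l)}\|A_l\|_2\Big\|b-\sum_{k=1}^LA_k\overline{x}_k\Big\|_2.$$ (b) If $n_0=0$, $p_l=1$, $D_l=I$, $c_l=0$ for all $l$, and $f(x_1,\ldots,x_L)=\frac12\|b-\sum_{l=1}^LA_lx_l\|_2^2+\sum_{l=1}^L\eta_l\|x_l\|_1$ with $b\in\mathbb{R}^q$, $A_l\in\mathbb{R}^{q\times n_l}$, $\eta_l\ge0$, then every d-stationary point $(x_1^*,\ldots,x_L^* )$ satisfies $T_{K_l,n_l,1}(x_l^* )=0$ for all $l$ provided $\gamma_l>\max_{j\in[n_l]}\|a_j^{(l)}\|_2\|b\|_2-\eta_l$ for all $l$, where $a_j^{(l)}$ is the $j$-th column of $A_l$.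
   Context: Trimmed $\ell_1$ norm: $T_{K,m,p}(z)=\min_{\Lambda\subset[m],|\Lambda|=m-K}\sum_{i\in\Lambda}\|z_i\|_2$ for $z=(z_1^\top,\ldots,z_m^\top)^\top$, $z_i\in\mathbb{R}^p$, $K\in\{0,\ldots,m-1\}$. Data: $n_0\ge0$, $\gamma_l>0$, $K_l\in\{0,\ldots,m_l-1\}$, $c_l\in\mathbb{R}^{m_lp_l}$, $D_l\ne0$ an $m_lp_l\times n_l$ matrix. $\|A\|_2$ is the spectral norm (largest singular value). d-stationary: directional derivative of the objective at the point is $\ge0$ in every direction. $\sigma_{\min}(A)$ = smallest nonzero singular value. For $D$ with $p\times n$ blocks and $(D)_\Lambda$ the submatrix of blocks indexed by $\Lambda$: $\sigma_{K,m,p}(D)=\sigma_{\min}(D)$ if $D$ is surjective, else $\min\{\sigma_{\min}((D)_\Lambda)\mid \Lambda\subset[m],|\Lambda|=m-K,(D)_\Lambda\ne0\}$. *)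

theory Defs
  imports "HOL-Analysis.Analysis"
begin

text \<open>Vectors of R^n are represented as functions nat => real, only the entries
  with index < n being relevant; matrices as nat => nat => real (row, column).
  Indices are 0-based.\<close>

definition vnorm2 :: "nat \<Rightarrow> (nat \<Rightarrow> real) \<Rightarrow> real" where
  "vnorm2 n v = sqrt (\<Sum>i<n. (v i)\<^sup>2)"

definition vnorm1 :: "nat \<Rightarrow> (nat \<Rightarrow> real) \<Rightarrow> real" where
  "vnorm1 n v = (\<Sum>i<n. \<bar>v i\<bar>)"

definition mv :: "(nat \<Rightarrow> nat \<Rightarrow> real) \<Rightarrow> nat \<Rightarrow> (nat \<Rightarrow> real) \<Rightarrow> nat \<Rightarrow> real" where
  "mv A n x = (\<lambda>i. \<Sum>j<n. A i j * x j)"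

definition block_norm :: "nat \<Rightarrow> (nat \<Rightarrow> real) \<Rightarrow> nat \<Rightarrow> real" where
  "block_norm p z i = sqrt (\<Sum>r<p. (z (i * p + r))\<^sup>2)"

definition trimmed :: "nat \<Rightarrow> nat \<Rightarrow> nat \<Rightarrow> (nat \<Rightarrow> real) \<Rightarrow> real" where
  "trimmed K m p z = Min ((\<lambda>\<Lambda>. \<Sum>i\<in>\<Lambda>. block_norm p z i) ` {\<Lambda>. \<Lambda> \<subseteq> {..<m} \<and> card \<Lambda> = m - K})"

text \<open>Singular values of the matrix consisting of the rows R (a finite index set)
  and the columns 0..n-1 of A: the s >= 0 such that s^2 is an eigenvalue of A^T A.\<close>
definition gram :: "nat set \<Rightarrow> (nat \<Rightarrow> nat \<Rightarrow> real) \<Rightarrow> nat \<Rightarrow> nat \<Rightarrow> real" where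
  "gram R A i j = (\<Sum>r\<in>R. A r i * A r j)"

definition is_singular_value :: "nat set \<Rightarrow> nat \<Rightarrow> (nat \<Rightarrow> nat \<Rightarrow> real) \<Rightarrow> real \<Rightarrow> bool" where
  "is_singular_value R n A s \<longleftrightarrow> s \<ge> 0 \<and>
     (\<exists>v. (\<exists>j<n. v j \<noteq> 0) \<and> (\<forall>i<n. (\<Sum>j<n. gram R A i j * v j) = s\<^sup>2 * v i))"

definition spec_norm :: "nat set \<Rightarrow> nat \<Rightarrow> (nat \<Rightarrow> nat \<Rightarrow> real) \<Rightarrow> real" where
  "spec_norm R n A = Max {s. is_singular_value R n A s}"

definition sigma_min :: "nat set \<Rightarrow> nat \<Rightarrow> (nat \<Rightarrow> nat \<Rightarrow> real) \<Rightarrow> real" where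
  "sigma_min R n A = Min {s. is_singular_value R n A s \<and> s > 0}"

definition surjective_mat :: "nat set \<Rightarrow> nat \<Rightarrow> (nat \<Rightarrow> nat \<Rightarrow> real) \<Rightarrow> bool" where
  "surjective_mat R n A \<longleftrightarrow> (\<forall>y. \<exists>x. \<forall>r\<in>R. mv A n x r = y r)"

definition mat_nonzero :: "nat set \<Rightarrow> nat \<Rightarrow> (nat \<Rightarrow> nat \<Rightarrow> real) \<Rightarrow> bool" where
  "mat_nonzero R n A \<longleftrightarrow> (\<exists>r\<in>R. \<exists>j<n. A r j \<noteq> 0)"

definition block_rows :: "nat \<Rightarrow> nat set \<Rightarrow> nat set" where
  "block_rows p \<Lambda> = {i * p + r | i r. i \<in> \<Lambda> \<and> r < p}"

definition sigmaK :: "nat \<Rightarrow> nat \<Rightarrow> nat \<Rightarrow> nat \<Rightarrow> (nat \<Rightarrow> nat \<Rightarrow> real) \<Rightarrow> real" where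
  "sigmaK K m p n D =
     (if surjective_mat {..<m * p} n D then sigma_min {..<m * p} n D
      else Min {sigma_min (block_rows p \<Lambda>) n D | \<Lambda>.
                  \<Lambda> \<subseteq> {..<m} \<and> card \<Lambda> = m - K \<and> mat_nonzero (block_rows p \<Lambda>) n D})"

definition d_stationary :: "((nat \<Rightarrow> nat \<Rightarrow> real) \<Rightarrow> real) \<Rightarrow> (nat \<Rightarrow> nat \<Rightarrow> real) \<Rightarrow> bool" where
  "d_stationary F x \<longleftrightarrow>
     (\<forall>d. \<exists>D. ((\<lambda>t. (F (\<lambda>l j. x l j + t * d l j) - F x) / t) \<longlongrightarrow> D) (at_right 0) \<and> D \<ge> 0)"

end

theory Submission
  imports Defs "Jordan_Normal_Form.Determinant"
begin

text \<open>At a d-stationary point the one-sided derivative of the objective in a direction \<open>d\<close> is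
  \<open>-\<langle>b - A x, A d\<rangle>\<close> plus the rate of change of the penalty. Moving towards the feasible
  points \<open>xbar\<^sub>l\<close>, where all trimmed penalties vanish, shows that the residual \<open>b - A x\<close> is no
  longer than \<open>b - A xbar\<close> (in (b), \<open>xbar = 0\<close> and the bound is \<open>\<parallel>b\<parallel>\<close>). If a trimmed
  penalty \<open>T = T\<^sub>K(D\<^sub>l x\<^sub>l - c\<^sub>l)\<close> were positive, shrink the blocks of an optimal index set:
  in (a) along a least-norm solution \<open>d\<close> of \<open>D\<^sub>l d = D\<^sub>l (xbar\<^sub>l - x\<^sub>l)\<close> on those rows, whose
  length is at most \<open>T / \<sigma>\<^sub>K(D\<^sub>l)\<close>; in (b) by shrinking one nonzero entry of such a block.
  The penalty then decreases at rate \<open>\<gamma>\<^sub>l T\<close> (resp. \<open>(\<gamma>\<^sub>l + \<eta>\<^sub>l) \<bar>x\<^sub>j\<bar>\<close>), while the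
  least-squares term grows at rate at most \<open>\<parallel>b - A x\<parallel> \<parallel>A\<^sub>l d\<parallel>\<close>; the lower bound on \<open>\<gamma>\<^sub>l\<close>
  makes this contradict stationarity. The estimates for \<open>\<sigma>\<^sub>K\<close> and the spectral norm come from
  an orthonormal eigenbasis of the Gram matrix, obtained by the Rayleigh-quotient proof of the
  spectral theorem.\<close>

definition dot :: "nat \<Rightarrow> (nat \<Rightarrow> real) \<Rightarrow> (nat \<Rightarrow> real) \<Rightarrow> real" where
  "dot n u v = (\<Sum>i<n. u i * v i)"

definition sym_matrix :: "nat \<Rightarrow> (nat \<Rightarrow> nat \<Rightarrow> real) \<Rightarrow> bool" where
  "sym_matrix n G \<longleftrightarrow> (\<forall>i<n. \<forall>j<n. G i j = G j i)"

lemma dot_commute: "dot n u v = dot n v u"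
  unfolding dot_def by (simp add: mult.commute)

lemma dot_add_left: "dot n (\<lambda>i. u i + v i) w = dot n u w + dot n v w"
  unfolding dot_def by (simp add: distrib_right sum.distrib)

lemma dot_add_right: "dot n w (\<lambda>i. u i + v i) = dot n w u + dot n w v"
  unfolding dot_def by (simp add: distrib_left sum.distrib)

lemma dot_diff_left: "dot n (\<lambda>i. u i - v i) w = dot n u w - dot n v w"
  unfolding dot_def by (simp add: left_diff_distrib sum_subtractf)

lemma dot_diff_right: "dot n w (\<lambda>i. u i - v i) = dot n w u - dot n w v"
  unfolding dot_def by (simp add: right_diff_distrib sum_subtractf)

lemma dot_scale_left: "dot n (\<lambda>i. t * u i) w = t * dot n u w"
  unfolding dot_def by (simp add: sum_distrib_left mult.assoc)

lemma dot_scale_right: "dot n w (\<lambda>i. t * u i) = t * dot n w u"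
  unfolding dot_def by (simp add: sum_distrib_left mult.left_commute)

lemma dot_sum_left: "dot n (\<lambda>i. \<Sum>a\<in>A. c a * U a i) w = (\<Sum>a\<in>A. c a * dot n (U a) w)"
proof -
  have "dot n (\<lambda>i. \<Sum>a\<in>A. c a * U a i) w = (\<Sum>i<n. \<Sum>a\<in>A. c a * U a i * w i)"
    unfolding dot_def by (simp add: sum_distrib_right)
  also have "\<dots> = (\<Sum>a\<in>A. \<Sum>i<n. c a * U a i * w i)" by (rule sum.swap)
  finally show ?thesis
    unfolding dot_def by (simp add: sum_distrib_left mult.assoc)
qed

lemma dot_cong:
  "(\<And>i. i < n \<Longrightarrow> u i = u' i) \<Longrightarrow> (\<And>i. i < n \<Longrightarrow> v i = v' i) \<Longrightarrow> dot n u v = dot n u' v'"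
  unfolding dot_def by (auto intro!: sum.cong)

lemma dot_self_nonneg: "0 \<le> dot n v v"
  unfolding dot_def by (auto intro!: sum_nonneg)

lemma dot_self_eq_0: "dot n v v = 0 \<longleftrightarrow> (\<forall>i<n. v i = 0)"
  unfolding dot_def by (subst sum_nonneg_eq_0_iff) auto

lemma dot_self_eq_vnorm2: "dot n v v = (vnorm2 n v)\<^sup>2"
  unfolding dot_def vnorm2_def by (simp add: sum_nonneg power2_eq_square)

lemma abs_dot_le_vnorm2: "\<bar>dot n u v\<bar> \<le> vnorm2 n u * vnorm2 n v"
proof -
  have "(dot n u v)\<^sup>2 \<le> (\<Sum>i<n. (u i)\<^sup>2) * (\<Sum>i<n. (v i)\<^sup>2)"
    unfolding dot_def by (rule Cauchy_Schwarz_ineq_sum)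
  then have "\<bar>dot n u v\<bar> \<le> sqrt ((\<Sum>i<n. (u i)\<^sup>2) * (\<Sum>i<n. (v i)\<^sup>2))"
    by (simp add: real_le_rsqrt)
  then show ?thesis
    unfolding vnorm2_def by (simp add: real_sqrt_mult)
qed

lemma vnorm2_nonneg: "0 \<le> vnorm2 n v"
  unfolding vnorm2_def by (simp add: sum_nonneg)

lemma vnorm2_scale: "vnorm2 n (\<lambda>i. a * v i) = \<bar>a\<bar> * vnorm2 n v"
  unfolding vnorm2_def by (simp add: power_mult_distrib sum_distrib_left[symmetric] real_sqrt_mult)

lemma unit_vector_coord_bound:
  assumes "dot n v v = 1" "i < n"
  shows "\<bar>v i\<bar> \<le> 1"
proof -
  have "(v i)\<^sup>2 \<le> (\<Sum>j<n. (v j)\<^sup>2)"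
    using assms(2) by (intro member_le_sum) auto
  also have "\<dots> = 1"
    using assms(1) unfolding dot_def by (simp add: power2_eq_square)
  finally show ?thesis
    using power2_le_iff_abs_le[of 1 "v i"] by simp
qed

lemma mv_add: "mv G n (\<lambda>j. u j + v j) = (\<lambda>i. mv G n u i + mv G n v i)"
  unfolding mv_def by (simp add: distrib_left sum.distrib)

lemma mv_diff: "mv G n (\<lambda>j. u j - v j) = (\<lambda>i. mv G n u i - mv G n v i)"
  unfolding mv_def by (simp add: right_diff_distrib sum_subtractf)

lemma mv_scale: "mv G n (\<lambda>j. t * v j) = (\<lambda>i. t * mv G n v i)"
  unfolding mv_def by (simp add: sum_distrib_left mult.left_commute)

lemma mv_cong: "(\<And>j. j < n \<Longrightarrow> u j = v j) \<Longrightarrow> mv G n u = mv G n v"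
  unfolding mv_def by (auto intro!: sum.cong)

lemma mv_sum: "mv G n (\<lambda>j. \<Sum>a\<in>A. c a * U a j) i = (\<Sum>a\<in>A. c a * mv G n (U a) i)"
proof -
  have "mv G n (\<lambda>j. \<Sum>a\<in>A. c a * U a j) i = (\<Sum>j<n. \<Sum>a\<in>A. G i j * (c a * U a j))"
    unfolding mv_def by (simp add: sum_distrib_left)
  also have "\<dots> = (\<Sum>a\<in>A. \<Sum>j<n. G i j * (c a * U a j))" by (rule sum.swap)
  finally show ?thesis
    unfolding mv_def by (simp add: sum_distrib_left mult.left_commute)
qed

lemma mv_zero: "mv G n (\<lambda>_. 0) = (\<lambda>_. 0)"
  unfolding mv_def by simp

lemma mv_unit_vector: "j < n \<Longrightarrow> mv G n (\<lambda>i. if i = j then 1 else 0) r = G r j"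
  unfolding mv_def by (simp add: if_distrib cong: if_cong)

lemma dot_mv_sym:
  assumes "sym_matrix n G"
  shows "dot n u (mv G n v) = dot n (mv G n u) v"
proof -
  have "dot n u (mv G n v) = (\<Sum>i<n. \<Sum>j<n. u i * G i j * v j)"
    unfolding dot_def mv_def by (simp add: sum_distrib_left mult.assoc)
  also have "\<dots> = (\<Sum>j<n. \<Sum>i<n. u i * G i j * v j)" by (rule sum.swap)
  also have "\<dots> = (\<Sum>j<n. \<Sum>i<n. G j i * u i * v j)"
    using assms unfolding sym_matrix_def by (intro sum.cong refl) (auto simp: mult.commute)
  finally show ?thesis
    unfolding dot_def mv_def by (simp add: sum_distrib_right)
qed

lemma quadratic_form_bound:
  assumes "\<And>i. i < n \<Longrightarrow> \<bar>v i\<bar> \<le> 1"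
  shows "dot n v (mv G n v) \<le> (\<Sum>i<n. \<Sum>j<n. \<bar>G i j\<bar>)"
proof -
  have "dot n v (mv G n v) = (\<Sum>i<n. \<Sum>j<n. v i * G i j * v j)"
    unfolding dot_def mv_def by (simp add: sum_distrib_left mult.assoc)
  also have "\<dots> \<le> (\<Sum>i<n. \<Sum>j<n. \<bar>G i j\<bar>)"
  proof (intro sum_mono)
    fix i j assume "i \<in> {..<n}" "j \<in> {..<n}"
    then have "\<bar>v i\<bar> * \<bar>v j\<bar> \<le> 1"
      using assms by (auto intro: mult_le_one)
    then have "\<bar>G i j\<bar> * (\<bar>v i\<bar> * \<bar>v j\<bar>) \<le> \<bar>G i j\<bar>"
      using mult_left_mono[of _ 1 "\<bar>G i j\<bar>"] by simp
    moreover have "v i * G i j * v j \<le> \<bar>v i * G i j * v j\<bar>"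
      by (rule abs_ge_self)
    moreover have "\<bar>v i * G i j * v j\<bar> = \<bar>G i j\<bar> * (\<bar>v i\<bar> * \<bar>v j\<bar>)"
      by (simp add: abs_mult mult_ac)
    ultimately show "v i * G i j * v j \<le> \<bar>G i j\<bar>"
      by linarith
  qed
  finally show ?thesis .
qed

lemma dot_perturb:
  "dot n (\<lambda>i. v i + t * g i) (\<lambda>i. v i + t * g i) = dot n v v + 2 * t * dot n g v + t\<^sup>2 * dot n g g"
  by (simp add: dot_add_left dot_add_right dot_scale_left dot_scale_right dot_commute[of n v g]
      power2_eq_square algebra_simps)

lemma quadratic_form_perturb:
  assumes "sym_matrix n G"
  shows "dot n (\<lambda>i. v i + t * g i) (mv G n (\<lambda>i. v i + t * g i))
    = dot n v (mv G n v) + 2 * t * dot n g (mv G n v) + t\<^sup>2 * dot n g (mv G n g)"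
proof -
  have "dot n v (mv G n g) = dot n g (mv G n v)"
    using dot_mv_sym[OF assms, of v g] dot_commute by metis
  then show ?thesis
    unfolding mv_add mv_scale
    by (simp add: dot_add_left dot_add_right dot_scale_left dot_scale_right power2_eq_square algebra_simps)
qed

lemma tendsto_dot:
  assumes "\<And>i. i < n \<Longrightarrow> (\<lambda>m. X m i) \<longlonglongrightarrow> u i" "\<And>i. i < n \<Longrightarrow> (\<lambda>m. Y m i) \<longlonglongrightarrow> v i"
  shows "(\<lambda>m. dot n (X m) (Y m)) \<longlonglongrightarrow> dot n u v"
  unfolding dot_def by (intro tendsto_sum tendsto_mult) (auto intro: assms)

lemma tendsto_mv:
  assumes "\<And>j. j < n \<Longrightarrow> (\<lambda>m. X m j) \<longlonglongrightarrow> v j"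
  shows "(\<lambda>m. mv G n (X m) i) \<longlonglongrightarrow> mv G n v i"
  unfolding mv_def by (intro tendsto_sum tendsto_mult tendsto_const) (auto intro: assms)

section \<open>Spectral theorem for symmetric matrices\<close>

lemma bounded_seq_coordinatewise_convergent_subseq:
  fixes X :: "nat \<Rightarrow> nat \<Rightarrow> real"
  assumes "\<And>m i. i < n \<Longrightarrow> \<bar>X m i\<bar> \<le> B"
  shows "\<exists>r. strict_mono r \<and> (\<forall>i<n. convergent (\<lambda>m. X (r m) i))"
  using assms
proof (induction n)
  case 0
  show ?case by (rule exI[of _ id]) (auto simp: strict_mono_def)
next
  case (Suc n)
  then obtain r where r: "strict_mono r" "\<forall>i<n. convergent (\<lambda>m. X (r m) i)"
    by auto
  obtain s where s: "strict_mono s" "monoseq (\<lambda>m. X (r (s m)) n)"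
    using seq_monosub[of "\<lambda>m. X (r m) n"] by blast
  have "Bseq (\<lambda>m. X (r (s m)) n)"
    using Suc.prems by (intro BseqI'[of _ B]) auto
  then have new: "convergent (\<lambda>m. X (r (s m)) n)"
    using Bseq_monoseq_convergent s(2) by blast
  have old: "convergent (\<lambda>m. X (r (s m)) i)" if "i < n" for i
    using convergent_subseq_convergent[OF _ s(1)] r(2) that by (auto simp: o_def)
  have "\<forall>i<Suc n. convergent (\<lambda>m. X ((r \<circ> s) m) i)"
    using new old by (auto simp: less_Suc_eq)
  moreover have "strict_mono (r \<circ> s)"
    using r(1) s(1) by (rule strict_mono_o)
  ultimately show ?case by blast
qed

lemma unit_orthogonal_seq_convergent_subseq:
  fixes X U :: "nat \<Rightarrow> nat \<Rightarrow> real"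
  assumes X: "\<And>m. dot n (X m) (X m) = 1 \<and> (\<forall>a<k. dot n (X m) (U a) = 0)"
  shows "\<exists>r v. strict_mono r \<and> (\<forall>i<n. (\<lambda>m. X (r m) i) \<longlonglongrightarrow> v i) \<and>
    dot n v v = 1 \<and> (\<forall>a<k. dot n v (U a) = 0)"
proof -
  have "\<bar>X m i\<bar> \<le> 1" if "i < n" for m i
    using X[of m] that unit_vector_coord_bound by blast
  then obtain r where r: "strict_mono r" "\<forall>i<n. convergent (\<lambda>m. X (r m) i)"
    using bounded_seq_coordinatewise_convergent_subseq[of n X 1] by blast
  define v where "v i = lim (\<lambda>m. X (r m) i)" for i
  have lim: "(\<lambda>m. X (r m) i) \<longlonglongrightarrow> v i" if "i < n" for i
    using r(2) that unfolding v_def by (simp add: convergent_LIMSEQ_iff)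
  have "(\<lambda>m. dot n (X (r m)) (X (r m))) \<longlonglongrightarrow> dot n v v"
    by (intro tendsto_dot lim)
  then have "dot n v v = 1"
    using X by (simp add: LIMSEQ_const_iff)
  moreover have "\<forall>a<k. dot n v (U a) = 0"
  proof (intro allI impI)
    fix a assume "a < k"
    have "(\<lambda>m. dot n (X (r m)) (U a)) \<longlonglongrightarrow> dot n v (U a)"
      by (intro tendsto_dot lim tendsto_const)
    then show "dot n v (U a) = 0"
      using X \<open>a < k\<close> by (simp add: LIMSEQ_const_iff)
  qed
  ultimately show ?thesis
    using r(1) lim by blast
qed

lemma rayleigh_maximizer_exists:
  fixes G U :: "nat \<Rightarrow> nat \<Rightarrow> real"
  assumes w: "dot n w w = 1" "\<forall>a<k. dot n w (U a) = 0"
  shows "\<exists>v. dot n v v = 1 \<and> (\<forall>a<k. dot n v (U a) = 0) \<and>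
    (\<forall>x. dot n x x = 1 \<longrightarrow> (\<forall>a<k. dot n x (U a) = 0) \<longrightarrow> dot n x (mv G n x) \<le> dot n v (mv G n v))"
proof -
  define S where "S = {x. dot n x x = 1 \<and> (\<forall>a<k. dot n x (U a) = 0)}"
  define f where "f x = dot n x (mv G n x)" for x
  define \<mu> where "\<mu> = Sup (f ` S)"
  have ne: "f ` S \<noteq> {}"
    using w unfolding S_def by blast
  have "f x \<le> (\<Sum>i<n. \<Sum>j<n. \<bar>G i j\<bar>)" if "x \<in> S" for x
    unfolding f_def using that unit_vector_coord_bound unfolding S_def
    by (intro quadratic_form_bound) blast
  then have bdd: "bdd_above (f ` S)"
    by (intro bdd_aboveI[where M = "\<Sum>i<n. \<Sum>j<n. \<bar>G i j\<bar>"]) blast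
  have upper: "f x \<le> \<mu>" if "x \<in> S" for x
    unfolding \<mu>_def using bdd that by (intro cSup_upper) simp_all
  have "\<exists>x\<in>S. \<mu> - inverse (real (Suc m)) < f x" for m
  proof -
    have "\<mu> - inverse (real (Suc m)) < Sup (f ` S)"
      unfolding \<mu>_def by simp
    then show ?thesis
      unfolding less_cSup_iff[OF ne bdd] by blast
  qed
  then obtain X where X: "\<And>m. X m \<in> S" "\<And>m. \<mu> - inverse (real (Suc m)) < f (X m)"
    by metis
  have XS: "dot n (X m) (X m) = 1 \<and> (\<forall>a<k. dot n (X m) (U a) = 0)" for m
    using X(1)[of m] unfolding S_def by blast
  obtain r v where r: "strict_mono r" and lim: "\<forall>i<n. (\<lambda>m. X (r m) i) \<longlonglongrightarrow> v i"
    and "dot n v v = 1" "\<forall>a<k. dot n v (U a) = 0"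
    using unit_orthogonal_seq_convergent_subseq[where X = X, OF XS] by blast
  then have "v \<in> S"
    unfolding S_def by blast
  moreover have "\<mu> \<le> f v"
  proof (rule tendsto_le[OF trivial_limit_sequentially])
    show "(\<lambda>m. f (X (r m))) \<longlonglongrightarrow> f v"
      unfolding f_def using lim by (intro tendsto_dot tendsto_mv) auto
    have "(\<lambda>m. \<mu> + - inverse (real (Suc (r m)))) \<longlonglongrightarrow> \<mu>"
      using LIMSEQ_subseq_LIMSEQ[OF LIMSEQ_inverse_real_of_nat_add_minus r] by (simp add: o_def)
    then show "(\<lambda>m. \<mu> - inverse (real (Suc (r m)))) \<longlonglongrightarrow> \<mu>"
      by simp
    show "\<forall>\<^sub>F m in sequentially. \<mu> - inverse (real (Suc (r m))) \<le> f (X (r m))"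
      using X(2) by (intro always_eventually allI less_imp_le)
  qed
  ultimately show ?thesis
    using upper order_trans unfolding S_def f_def by blast
qed

lemma rayleigh_bound_homogeneous:
  assumes max: "\<forall>x. dot n x x = 1 \<longrightarrow> (\<forall>a<k. dot n x (U a) = 0) \<longrightarrow> dot n x (mv G n x) \<le> \<mu>"
    and x: "\<forall>a<k. dot n x (U a) = 0"
  shows "dot n x (mv G n x) \<le> \<mu> * dot n x x"
proof (cases "dot n x x = 0")
  case True
  then have "dot n x (mv G n x) = dot n (\<lambda>_. 0) (mv G n x)"
    by (intro dot_cong) (auto simp: dot_self_eq_0)
  then show ?thesis
    using True by (simp add: dot_def)
next
  case False
  define s where "s = 1 / sqrt (dot n x x)"
  have pos: "0 < dot n x x"
    using False dot_self_nonneg[of n x] by simp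
  have "dot n (\<lambda>i. s * x i) (\<lambda>i. s * x i) = s * s * dot n x x"
    by (simp add: dot_scale_left dot_scale_right mult.assoc)
  also have "\<dots> = 1"
    using pos unfolding s_def by (simp add: field_simps)
  finally have "dot n (\<lambda>i. s * x i) (\<lambda>i. s * x i) = 1" .
  moreover have "\<forall>a<k. dot n (\<lambda>i. s * x i) (U a) = 0"
    using x by (simp add: dot_scale_left)
  ultimately have "dot n (\<lambda>i. s * x i) (mv G n (\<lambda>i. s * x i)) \<le> \<mu>"
    using max by blast
  moreover have "dot n (\<lambda>i. s * x i) (mv G n (\<lambda>i. s * x i)) = s * s * dot n x (mv G n x)"
    by (simp add: mv_scale dot_scale_left dot_scale_right)
  ultimately have "s * s * dot n x (mv G n x) \<le> \<mu>"
    by simp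
  then show ?thesis
    using pos unfolding s_def by (simp add: field_simps)
qed

lemma quadratic_nonpos_imp_linear_zero:
  fixes S B :: real
  assumes "\<And>t. 2 * t * S + t\<^sup>2 * B \<le> 0" "0 \<le> S"
  shows "S = 0"
proof (rule ccontr)
  assume "S \<noteq> 0"
  with assms(2) have S: "S > 0" by simp
  define t where "t = S / (\<bar>B\<bar> + 1)"
  have t: "t > 0"
    using S by (simp add: t_def add_pos_nonneg)
  have "t * \<bar>B\<bar> < S"
    using S unfolding t_def by (simp add: field_simps add_pos_nonneg)
  then have "t\<^sup>2 * \<bar>B\<bar> < 2 * t * S"
    using t S mult_strict_left_mono[of "t * \<bar>B\<bar>" S t] by (simp add: power2_eq_square algebra_simps)
  moreover have "- (t\<^sup>2 * \<bar>B\<bar>) \<le> t\<^sup>2 * B"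
    using mult_left_mono[of "-\<bar>B\<bar>" B "t\<^sup>2"] by simp
  ultimately show False
    using assms(1)[of t] by linarith
qed

definition orthonormal :: "nat \<Rightarrow> nat \<Rightarrow> (nat \<Rightarrow> nat \<Rightarrow> real) \<Rightarrow> bool" where
  "orthonormal n k U \<longleftrightarrow> (\<forall>a<k. \<forall>b<k. dot n (U a) (U b) = (if a = b then 1 else 0))"

definition eigenpairs ::
    "nat \<Rightarrow> (nat \<Rightarrow> nat \<Rightarrow> real) \<Rightarrow> nat \<Rightarrow> (nat \<Rightarrow> nat \<Rightarrow> real) \<Rightarrow> (nat \<Rightarrow> real) \<Rightarrow> bool" where
  "eigenpairs n G k U lam \<longleftrightarrow> (\<forall>a<k. \<forall>i<n. mv G n (U a) i = lam a * U a i)"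

definition complete_family :: "nat \<Rightarrow> nat \<Rightarrow> (nat \<Rightarrow> nat \<Rightarrow> real) \<Rightarrow> bool" where
  "complete_family n k U \<longleftrightarrow> (\<forall>v. \<forall>i<n. v i = (\<Sum>a<k. dot n v (U a) * U a i))"

lemma constrained_rayleigh_maximizer_eigenvector:
  assumes sym: "sym_matrix n G" and eig: "eigenpairs n G k U lam"
    and v: "dot n v v = 1" "\<forall>a<k. dot n v (U a) = 0"
    and max: "\<forall>x. dot n x x = 1 \<longrightarrow> (\<forall>a<k. dot n x (U a) = 0) \<longrightarrow>
                  dot n x (mv G n x) \<le> dot n v (mv G n v)"
  shows "\<forall>i<n. mv G n v i = dot n v (mv G n v) * v i"
proof -
  define \<mu> where "\<mu> = dot n v (mv G n v)"
  define g where "g i = mv G n v i - \<mu> * v i" for i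
  have g_orth: "dot n g (U a) = 0" if "a < k" for a
  proof -
    have "dot n g (U a) = dot n (mv G n v) (U a) - \<mu> * dot n v (U a)"
      unfolding g_def by (simp add: dot_diff_left dot_scale_left)
    also have "dot n (mv G n v) (U a) = dot n v (mv G n (U a))"
      using dot_mv_sym[OF sym] by simp
    also have "\<dots> = dot n v (\<lambda>i. lam a * U a i)"
      using eig that unfolding eigenpairs_def by (intro dot_cong) auto
    finally show ?thesis
      using v(2) that by (simp add: dot_scale_right)
  qed
  \<comment> \<open>\<open>\<mu>\<close> is also the maximum along the perturbations \<open>v + t g\<close>, which forces \<open>g = 0\<close>.\<close>
  have "2 * t * dot n g g + t\<^sup>2 * (dot n g (mv G n g) - \<mu> * dot n g g) \<le> 0" for t
  proof -
    have "\<forall>a<k. dot n (\<lambda>i. v i + t * g i) (U a) = 0"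
      using g_orth v(2) by (simp add: dot_add_left dot_scale_left)
    then have "dot n (\<lambda>i. v i + t * g i) (mv G n (\<lambda>i. v i + t * g i))
        \<le> \<mu> * dot n (\<lambda>i. v i + t * g i) (\<lambda>i. v i + t * g i)"
      using rayleigh_bound_homogeneous[OF max] unfolding \<mu>_def by blast
    then have "2 * t * (dot n g (mv G n v) - \<mu> * dot n g v)
        + t\<^sup>2 * (dot n g (mv G n g) - \<mu> * dot n g g) \<le> 0"
      unfolding quadratic_form_perturb[OF sym] dot_perturb using v(1)
      by (simp add: \<mu>_def algebra_simps)
    moreover have "dot n g g = dot n g (mv G n v) - \<mu> * dot n g v"
      unfolding g_def[abs_def] by (simp add: dot_diff_right dot_scale_right)
    ultimately show ?thesis
      by simp
  qed
  then have "dot n g g = 0"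
    using quadratic_nonpos_imp_linear_zero dot_self_nonneg by blast
  then show ?thesis
    unfolding \<mu>_def g_def dot_self_eq_0 by simp
qed

lemma exists_unit_orthogonal:
  assumes on: "orthonormal n k U" and incomplete: "\<not> complete_family n k U"
  shows "\<exists>w. dot n w w = 1 \<and> (\<forall>a<k. dot n w (U a) = 0)"
proof -
  obtain v i where i: "i < n" "v i \<noteq> (\<Sum>a<k. dot n v (U a) * U a i)"
    using incomplete unfolding complete_family_def by blast
  define r where "r j = v j - (\<Sum>a<k. dot n v (U a) * U a j)" for j
  have r_orth: "dot n r (U b) = 0" if "b < k" for b
  proof -
    have "dot n r (U b) = dot n v (U b) - (\<Sum>a<k. dot n v (U a) * dot n (U a) (U b))"
      unfolding r_def[abs_def] by (simp add: dot_diff_left dot_sum_left)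
    also have "(\<Sum>a<k. dot n v (U a) * dot n (U a) (U b)) = (\<Sum>a<k. if a = b then dot n v (U a) else 0)"
      using on that unfolding orthonormal_def by (intro sum.cong) auto
    also have "\<dots> = dot n v (U b)"
      using that by simp
    finally show ?thesis by simp
  qed
  have "dot n r r \<noteq> 0"
    using i unfolding dot_self_eq_0 r_def by auto
  then have pos: "0 < dot n r r"
    using dot_self_nonneg[of n r] by simp
  define s where "s = 1 / sqrt (dot n r r)"
  have "dot n (\<lambda>j. s * r j) (\<lambda>j. s * r j) = s * s * dot n r r"
    by (simp add: dot_scale_left dot_scale_right mult.assoc)
  also have "\<dots> = 1"
    using pos unfolding s_def by (simp add: field_simps)
  finally have "dot n (\<lambda>j. s * r j) (\<lambda>j. s * r j) = 1" .
  moreover have "\<forall>a<k. dot n (\<lambda>j. s * r j) (U a) = 0"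
    using r_orth by (simp add: dot_scale_left)
  ultimately show ?thesis by blast
qed

lemma orthonormal_extend:
  assumes "orthonormal n k U" "dot n u u = 1" "\<forall>a<k. dot n u (U a) = 0"
  shows "orthonormal n (Suc k) (U(k := u))"
  unfolding orthonormal_def
proof (intro allI impI)
  fix a b assume "a < Suc k" "b < Suc k"
  then consider "a < k" "b < k" | "a = k" "b < k" | "a < k" "b = k" | "a = k" "b = k"
    by linarith
  then show "dot n ((U(k := u)) a) ((U(k := u)) b) = (if a = b then 1 else 0)"
    by cases (use assms in \<open>auto simp: orthonormal_def dot_commute[of n "U a" u]\<close>)
qed

lemma orthonormal_square_complete:
  assumes on: "orthonormal n n U"
  shows "complete_family n n U"
  unfolding complete_family_def
proof (intro allI impI)
  fix v :: "nat \<Rightarrow> real" and i assume i: "i < n"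
  define Q where "Q = mat n n (\<lambda>(i, a). U a i)"
  have Q: "Q \<in> carrier_mat n n"
    unfolding Q_def by simp
  have "transpose_mat Q * Q = 1\<^sub>m n"
  proof (rule eq_matI)
    fix a b assume "a < dim_row (1\<^sub>m n)" "b < dim_col (1\<^sub>m n)"
    then show "(transpose_mat Q * Q) $$ (a, b) = 1\<^sub>m n $$ (a, b)"
      using on unfolding Q_def orthonormal_def dot_def
      by (simp add: scalar_prod_def atLeast0LessThan)
  qed (use Q in auto)
  then have QQ: "Q * transpose_mat Q = 1\<^sub>m n"
    using mat_mult_left_right_inverse[of "transpose_mat Q" n Q] Q by auto
  have rows: "(\<Sum>a<n. U a j * U a i) = (if j = i then 1 else 0)" if "j < n" for j
  proof -
    have "(Q * transpose_mat Q) $$ (j, i) = (\<Sum>a<n. U a j * U a i)"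
      using i that Q unfolding Q_def by (simp add: scalar_prod_def atLeast0LessThan)
    then show ?thesis
      using QQ i that by simp
  qed
  have "(\<Sum>a<n. dot n v (U a) * U a i) = (\<Sum>a<n. \<Sum>j<n. v j * (U a j * U a i))"
    unfolding dot_def by (simp add: sum_distrib_right mult.assoc)
  also have "\<dots> = (\<Sum>j<n. \<Sum>a<n. v j * (U a j * U a i))"
    by (rule sum.swap)
  also have "\<dots> = (\<Sum>j<n. if j = i then v j else 0)"
    by (intro sum.cong) (auto simp: rows simp flip: sum_distrib_left)
  also have "\<dots> = v i"
    using i by simp
  finally show "v i = (\<Sum>a<n. dot n v (U a) * U a i)" by simp
qed

lemma orthonormal_eigenpairs_extend:
  assumes sym: "sym_matrix n G" and on: "orthonormal n k U" and eig: "eigenpairs n G k U lam"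
    and incomplete: "\<not> complete_family n k U"
  obtains u \<mu> where "orthonormal n (Suc k) (U(k := u))" "eigenpairs n G (Suc k) (U(k := u)) (lam(k := \<mu>))"
proof -
  obtain w where "dot n w w = 1" "\<forall>a<k. dot n w (U a) = 0"
    using exists_unit_orthogonal[OF on incomplete] by blast
  then obtain v where v: "dot n v v = 1" "\<forall>a<k. dot n v (U a) = 0"
    and max: "\<forall>x. dot n x x = 1 \<longrightarrow> (\<forall>a<k. dot n x (U a) = 0) \<longrightarrow>
                dot n x (mv G n x) \<le> dot n v (mv G n v)"
    using rayleigh_maximizer_exists by blast
  have "\<forall>i<n. mv G n v i = dot n v (mv G n v) * v i"
    using constrained_rayleigh_maximizer_eigenvector[OF sym eig v max] .
  then have "eigenpairs n G (Suc k) (U(k := v)) (lam(k := dot n v (mv G n v)))"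
    using eig unfolding eigenpairs_def by (auto simp: less_Suc_eq)
  then show ?thesis
    using that orthonormal_extend[OF on v] by blast
qed

theorem sym_matrix_orthonormal_eigenbasis:
  assumes sym: "sym_matrix n G"
  shows "\<exists>k U lam. orthonormal n k U \<and> eigenpairs n G k U lam \<and> complete_family n k U"
proof -
  \<comment> \<open>Extend an orthonormal family of eigenvectors until it is complete, which happens by \<open>k = n\<close>.\<close>
  have "(\<exists>U lam. orthonormal n k U \<and> eigenpairs n G k U lam) \<or>
        (\<exists>k U lam. orthonormal n k U \<and> eigenpairs n G k U lam \<and> complete_family n k U)"
    if "k \<le> n" for k
    using that
  proof (induction k)
    case 0
    show ?case by (auto simp: orthonormal_def eigenpairs_def)
  next
    case (Suc k)
    then have "k \<le> n"
      by simp
    with Suc.IH consider (partial) U lam where "orthonormal n k U" "eigenpairs n G k U lam"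
      | (complete) "\<exists>k U lam. orthonormal n k U \<and> eigenpairs n G k U lam \<and> complete_family n k U"
      by blast
    then show ?case
    proof cases
      case partial
      show ?thesis
      proof (cases "complete_family n k U")
        case False
        then obtain u \<mu> where "orthonormal n (Suc k) (U(k := u))"
          "eigenpairs n G (Suc k) (U(k := u)) (lam(k := \<mu>))"
          by (rule orthonormal_eigenpairs_extend[OF sym partial])
        then show ?thesis
          by blast
      qed (use partial in blast)
    qed blast
  qed
  then show ?thesis
    using orthonormal_square_complete by blast
qed

section \<open>Singular values through the Gram matrix\<close>

lemma gram_sym: "sym_matrix n (gram R M)"
  unfolding sym_matrix_def gram_def by (simp add: mult.commute)

lemma gram_quadratic_form: "dot n v (mv (gram R M) n v) = (\<Sum>r\<in>R. (mv M n v r)\<^sup>2)"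
proof -
  have "dot n v (mv (gram R M) n v) = (\<Sum>i<n. \<Sum>j<n. \<Sum>r\<in>R. (M r i * v i) * (M r j * v j))"
    unfolding dot_def mv_def gram_def by (simp add: sum_distrib_left sum_distrib_right mult_ac)
  also have "\<dots> = (\<Sum>i<n. \<Sum>r\<in>R. \<Sum>j<n. (M r i * v i) * (M r j * v j))"
    by (rule sum.cong[OF refl], rule sum.swap)
  also have "\<dots> = (\<Sum>r\<in>R. \<Sum>i<n. \<Sum>j<n. (M r i * v i) * (M r j * v j))"
    by (rule sum.swap)
  finally show ?thesis
    unfolding mv_def power2_eq_square by (simp add: sum_product)
qed

lemma singular_value_iff_gram_eigenvalue:
  "is_singular_value R n M s \<longleftrightarrow>
     0 \<le> s \<and> (\<exists>v. (\<exists>j<n. v j \<noteq> 0) \<and> (\<forall>i<n. mv (gram R M) n v i = s\<^sup>2 * v i))"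
  unfolding is_singular_value_def mv_def ..

locale gram_eigenbasis =
  fixes R :: "nat set" and n :: nat and M :: "nat \<Rightarrow> nat \<Rightarrow> real"
    and k :: nat and U :: "nat \<Rightarrow> nat \<Rightarrow> real" and lam :: "nat \<Rightarrow> real"
  assumes orthonormal: "orthonormal n k U"
    and eigenpairs: "eigenpairs n (gram R M) k U lam"
    and complete: "complete_family n k U"
begin

lemma expand: "i < n \<Longrightarrow> v i = (\<Sum>a<k. dot n v (U a) * U a i)"
  using complete unfolding complete_family_def by blast

lemma eigen: "a < k \<Longrightarrow> i < n \<Longrightarrow> mv (gram R M) n (U a) i = lam a * U a i"
  using eigenpairs unfolding eigenpairs_def by blast

lemma dot_combination:
  assumes "P \<subseteq> {..<k}" "a < k"
  shows "dot n (\<lambda>i. \<Sum>b\<in>P. c b * U b i) (U a) = (if a \<in> P then c a else 0)"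
proof -
  have "dot n (\<lambda>i. \<Sum>b\<in>P. c b * U b i) (U a) = (\<Sum>b\<in>P. c b * dot n (U b) (U a))"
    by (rule dot_sum_left)
  also have "\<dots> = (\<Sum>b\<in>P. if b = a then c b else 0)"
    using assms orthonormal unfolding orthonormal_def by (intro sum.cong) auto
  finally show ?thesis
    using assms(1) by (simp add: finite_subset)
qed

lemma dot_expansion: "dot n v w = (\<Sum>a<k. dot n v (U a) * dot n w (U a))"
proof -
  have "dot n v w = dot n (\<lambda>i. \<Sum>a<k. dot n v (U a) * U a i) w"
    by (intro dot_cong expand) auto
  also have "\<dots> = (\<Sum>a<k. dot n v (U a) * dot n w (U a))"
    by (simp add: dot_sum_left dot_commute)
  finally show ?thesis .
qed

lemma parseval: "dot n v v = (\<Sum>a<k. (dot n v (U a))\<^sup>2)"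
  using dot_expansion[of v v] by (simp add: power2_eq_square)

lemma energy: "(\<Sum>r\<in>R. (mv M n v r)\<^sup>2) = (\<Sum>a<k. lam a * (dot n v (U a))\<^sup>2)"
proof -
  have "mv (gram R M) n v i = (\<Sum>a<k. (lam a * dot n v (U a)) * U a i)" if "i < n" for i
  proof -
    have "mv (gram R M) n v = mv (gram R M) n (\<lambda>j. \<Sum>a<k. dot n v (U a) * U a j)"
      by (intro mv_cong expand)
    then have "mv (gram R M) n v i = (\<Sum>a<k. dot n v (U a) * mv (gram R M) n (U a) i)"
      by (simp only: mv_sum)
    also have "\<dots> = (\<Sum>a<k. (lam a * dot n v (U a)) * U a i)"
      using that by (intro sum.cong) (auto simp: eigen)
    finally show ?thesis .
  qed
  then have "dot n (mv (gram R M) n v) v = (\<Sum>a<k. (lam a * dot n v (U a)) * dot n (U a) v)"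
    by (simp add: dot_cong[of n _ "\<lambda>i. \<Sum>a<k. (lam a * dot n v (U a)) * U a i" v v] dot_sum_left)
  moreover have "(\<Sum>r\<in>R. (mv M n v r)\<^sup>2) = dot n (mv (gram R M) n v) v"
    by (simp add: gram_quadratic_form[symmetric] dot_commute)
  ultimately show ?thesis
    by (simp add: dot_commute power2_eq_square mult_ac)
qed

lemma eigenvalue_eq:
  assumes "a < k"
  shows "lam a = (\<Sum>r\<in>R. (mv M n (U a) r)\<^sup>2)"
proof -
  have "(\<Sum>b<k. lam b * (dot n (U a) (U b))\<^sup>2) = (\<Sum>b<k. if b = a then lam b else 0)"
    using orthonormal assms unfolding orthonormal_def by (intro sum.cong) auto
  then show ?thesis
    using assms by (simp add: energy)
qed

lemma eigenvalue_nonneg: "a < k \<Longrightarrow> 0 \<le> lam a"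
  by (simp add: eigenvalue_eq sum_nonneg)

lemma singular_value_iff: "is_singular_value R n M s \<longleftrightarrow> 0 \<le> s \<and> (\<exists>a<k. s\<^sup>2 = lam a)"
proof
  assume "is_singular_value R n M s"
  then obtain v where s: "0 \<le> s" and v: "\<exists>j<n. v j \<noteq> 0"
    and ev: "\<forall>i<n. mv (gram R M) n v i = s\<^sup>2 * v i"
    unfolding singular_value_iff_gram_eigenvalue by blast
  have "\<exists>a<k. s\<^sup>2 = lam a"
  proof (rule ccontr)
    assume no_eigenvalue: "\<not> ?thesis"
    have "dot n v (U a) = 0" if "a < k" for a
    proof -
      have "dot n (mv (gram R M) n v) (U a) = dot n (\<lambda>i. s\<^sup>2 * v i) (U a)"
        using ev by (intro dot_cong) auto
      then have "s\<^sup>2 * dot n v (U a) = dot n (mv (gram R M) n v) (U a)"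
        by (simp add: dot_scale_left)
      also have "\<dots> = dot n v (mv (gram R M) n (U a))"
        by (simp add: dot_mv_sym[OF gram_sym])
      also have "\<dots> = dot n v (\<lambda>i. lam a * U a i)"
        using that by (intro dot_cong) (auto simp: eigen)
      finally have "(s\<^sup>2 - lam a) * dot n v (U a) = 0"
        by (simp add: dot_scale_right algebra_simps)
      then show ?thesis
        using no_eigenvalue that by simp
    qed
    then have "\<forall>j<n. v j = 0"
      by (simp add: expand[of _ v])
    then show False
      using v by blast
  qed
  then show "0 \<le> s \<and> (\<exists>a<k. s\<^sup>2 = lam a)"
    using s by blast
next
  assume "0 \<le> s \<and> (\<exists>a<k. s\<^sup>2 = lam a)"
  then obtain a where s: "0 \<le> s" and a: "a < k" "s\<^sup>2 = lam a"
    by blast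
  have "dot n (U a) (U a) = 1"
    using orthonormal a unfolding orthonormal_def by simp
  then have "\<exists>j<n. U a j \<noteq> 0"
    using dot_self_eq_0[of n "U a"] by auto
  then show "is_singular_value R n M s"
    unfolding singular_value_iff_gram_eigenvalue using s a by (auto simp: eigen)
qed

lemma sqrt_eigenvalue_singular: "a < k \<Longrightarrow> is_singular_value R n M (sqrt (lam a))"
  using eigenvalue_nonneg by (auto simp: singular_value_iff)

lemma finite_singular_values: "finite {s. is_singular_value R n M s}"
proof (rule finite_subset)
  show "{s. is_singular_value R n M s} \<subseteq> (\<lambda>a. sqrt (lam a)) ` {..<k}"
  proof
    fix s assume "s \<in> {s. is_singular_value R n M s}"
    then obtain a where a: "a < k" "0 \<le> s" "s\<^sup>2 = lam a"
      by (auto simp: singular_value_iff)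
    then have "s = sqrt (lam a)"
      by (simp flip: a(3))
    then show "s \<in> (\<lambda>a. sqrt (lam a)) ` {..<k}"
      using a(1) by auto
  qed
qed simp

lemma sqrt_eigenvalue_le_spec_norm: "a < k \<Longrightarrow> sqrt (lam a) \<le> spec_norm R n M"
  unfolding spec_norm_def using finite_singular_values sqrt_eigenvalue_singular by simp

lemma eigenvalue_le_spec_norm: "a < k \<Longrightarrow> lam a \<le> (spec_norm R n M)\<^sup>2"
  using power_mono[OF sqrt_eigenvalue_le_spec_norm, of a 2] eigenvalue_nonneg by simp

lemma energy_le_spec_norm: "(\<Sum>r\<in>R. (mv M n v r)\<^sup>2) \<le> (spec_norm R n M)\<^sup>2 * dot n v v"
proof -
  have "(\<Sum>r\<in>R. (mv M n v r)\<^sup>2) \<le> (\<Sum>a<k. (spec_norm R n M)\<^sup>2 * (dot n v (U a))\<^sup>2)"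
    unfolding energy by (intro sum_mono mult_right_mono eigenvalue_le_spec_norm) auto
  then show ?thesis
    by (simp add: parseval sum_distrib_left)
qed

lemma spec_norm_nonneg: "0 < n \<Longrightarrow> 0 \<le> spec_norm R n M"
proof -
  assume "0 < n"
  have "k \<noteq> 0"
  proof
    assume "k = 0"
    then show False
      using expand[of 0 "\<lambda>_. 1"] \<open>0 < n\<close> by simp
  qed
  then have "0 \<le> sqrt (lam 0)"
    using eigenvalue_nonneg[of 0] by simp
  then show ?thesis
    using sqrt_eigenvalue_le_spec_norm[of 0] \<open>k \<noteq> 0\<close> by linarith
qed

lemma sigma_min_sq_le_eigenvalue:
  assumes "a < k" "0 < lam a"
  shows "0 < sigma_min R n M \<and> (sigma_min R n M)\<^sup>2 \<le> lam a"
proof -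
  define S where "S = {s. is_singular_value R n M s \<and> s > 0}"
  have fin: "finite S"
    using finite_singular_values unfolding S_def by (auto intro: finite_subset)
  have sqrt_in: "sqrt (lam a) \<in> S"
    using sqrt_eigenvalue_singular assms unfolding S_def by simp
  have "Min S \<in> S"
    using fin sqrt_in by (intro Min_in) auto
  then have pos: "0 < Min S"
    unfolding S_def by simp
  have "(Min S)\<^sup>2 \<le> (sqrt (lam a))\<^sup>2"
    using Min_le[OF fin sqrt_in] pos by (intro power_mono) auto
  then show ?thesis
    using pos assms unfolding sigma_min_def S_def[symmetric] by simp
qed

lemma sigma_min_pos:
  assumes "finite R" "mat_nonzero R n M"
  shows "0 < sigma_min R n M"
proof -
  obtain r0 j where r0: "r0 \<in> R" and j: "j < n" and nz: "M r0 j \<noteq> 0"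
    using assms(2) unfolding mat_nonzero_def by blast
  define e where "e i = (if i = j then 1 else 0 :: real)" for i
  have "0 < (\<Sum>r\<in>R. (M r j)\<^sup>2)"
    using assms(1) r0 nz by (intro sum_pos2[of R r0]) auto
  also have "\<dots> = (\<Sum>a<k. lam a * (dot n e (U a))\<^sup>2)"
    using energy[of e] j unfolding e_def by (simp add: mv_unit_vector)
  finally have "(\<Sum>a<k. lam a * (dot n e (U a))\<^sup>2) \<noteq> 0"
    by simp
  then obtain a where "a \<in> {..<k}" "lam a * (dot n e (U a))\<^sup>2 \<noteq> 0"
    by (rule sum.not_neutral_contains_not_neutral)
  then have "a < k" "0 < lam a"
    using eigenvalue_nonneg[of a] by (auto simp: order_le_less)
  then show ?thesis
    using sigma_min_sq_le_eigenvalue by blast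
qed

lemma kernel_eigenvector:
  assumes "finite R" "a < k" "lam a = 0" "r \<in> R"
  shows "mv M n (U a) r = 0"
proof -
  have "(\<Sum>r\<in>R. (mv M n (U a) r)\<^sup>2) = 0"
    using assms eigenvalue_eq[of a] by simp
  then show ?thesis
    using assms by (simp add: sum_nonneg_eq_0_iff)
qed

text \<open>The least-norm preimage keeps only the components along eigenvectors with positive
  eigenvalue; the others lie in the kernel of \<open>M\<close>.\<close>
lemma least_norm_preimage:
  assumes "finite R"
  shows "\<exists>d. (\<forall>r\<in>R. mv M n d r = mv M n x r) \<and>
             (sigma_min R n M)\<^sup>2 * dot n d d \<le> (\<Sum>r\<in>R. (mv M n d r)\<^sup>2)"
proof -
  define P where "P = {a. a < k \<and> 0 < lam a}"
  have P: "P \<subseteq> {..<k}"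
    unfolding P_def by auto
  define d where "d i = (\<Sum>a\<in>P. dot n x (U a) * U a i)" for i
  have d_coord: "dot n d (U a) = (if a \<in> P then dot n x (U a) else 0)" if "a < k" for a
    unfolding d_def[abs_def] using dot_combination[OF P that] .
  have kernel: "mv M n (U a) r = 0" if "a < k" "a \<notin> P" "r \<in> R" for a r
  proof -
    have "lam a = 0"
      using that eigenvalue_nonneg[of a] unfolding P_def by simp
    then show ?thesis
      using kernel_eigenvector[OF assms] that by blast
  qed
  have "mv M n d r = mv M n x r" if "r \<in> R" for r
  proof -
    have "mv M n x = mv M n (\<lambda>j. \<Sum>a<k. dot n x (U a) * U a j)"
      by (intro mv_cong expand)
    then have "mv M n x r = (\<Sum>a<k. dot n x (U a) * mv M n (U a) r)"
      by (simp add: mv_sum)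
    also have "\<dots> = (\<Sum>a\<in>P. dot n x (U a) * mv M n (U a) r)"
      using P kernel that by (intro sum.mono_neutral_right) auto
    finally show ?thesis
      unfolding d_def[abs_def] by (simp add: mv_sum)
  qed
  moreover have "(sigma_min R n M)\<^sup>2 * dot n d d \<le> (\<Sum>r\<in>R. (mv M n d r)\<^sup>2)"
  proof -
    have "(sigma_min R n M)\<^sup>2 * dot n d d = (\<Sum>a<k. (sigma_min R n M)\<^sup>2 * (dot n d (U a))\<^sup>2)"
      by (simp add: parseval sum_distrib_left)
    also have "\<dots> \<le> (\<Sum>a<k. lam a * (dot n d (U a))\<^sup>2)"
      using sigma_min_sq_le_eigenvalue d_coord unfolding P_def
      by (intro sum_mono) (auto intro: mult_right_mono)
    finally show ?thesis
      by (simp add: energy)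
  qed
  ultimately show ?thesis
    by blast
qed

end

lemma gram_eigenbasis_exists: "\<exists>k U lam. gram_eigenbasis R n M k U lam"
  using sym_matrix_orthonormal_eigenbasis[OF gram_sym] unfolding gram_eigenbasis_def by blast

lemma spec_norm_nonneg:
  assumes "0 < n"
  shows "0 \<le> spec_norm R n M"
proof -
  obtain k U lam where "gram_eigenbasis R n M k U lam"
    using gram_eigenbasis_exists by blast
  then show ?thesis
    using assms by (rule gram_eigenbasis.spec_norm_nonneg)
qed

lemma vnorm2_mv_le_spec_norm:
  assumes "0 < n"
  shows "vnorm2 q (mv M n v) \<le> spec_norm {..<q} n M * vnorm2 n v"
proof -
  obtain k U lam where "gram_eigenbasis {..<q} n M k U lam"
    using gram_eigenbasis_exists by blast
  then interpret gram_eigenbasis "{..<q}" n M k U lam .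
  have "(vnorm2 q (mv M n v))\<^sup>2 = (\<Sum>r<q. (mv M n v r)\<^sup>2)"
    unfolding vnorm2_def by (simp add: sum_nonneg)
  also have "\<dots> \<le> (spec_norm {..<q} n M)\<^sup>2 * (vnorm2 n v)\<^sup>2"
    using energy_le_spec_norm[of v] by (simp add: dot_self_eq_vnorm2)
  finally have "(vnorm2 q (mv M n v))\<^sup>2 \<le> (spec_norm {..<q} n M * vnorm2 n v)\<^sup>2"
    by (simp add: power_mult_distrib)
  moreover have "0 \<le> spec_norm {..<q} n M * vnorm2 n v"
    using spec_norm_nonneg[OF assms] by (simp add: vnorm2_def sum_nonneg)
  ultimately show ?thesis
    by (rule power2_le_imp_le)
qed

lemma sigma_min_pos:
  assumes "finite R" "mat_nonzero R n M"
  shows "0 < sigma_min R n M"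
proof -
  obtain k U lam where "gram_eigenbasis R n M k U lam"
    using gram_eigenbasis_exists by blast
  then show ?thesis
    using assms by (rule gram_eigenbasis.sigma_min_pos)
qed

lemma least_norm_preimage:
  assumes "finite R"
  shows "\<exists>d. (\<forall>r\<in>R. mv M n d r = mv M n x r) \<and>
             (sigma_min R n M)\<^sup>2 * (vnorm2 n d)\<^sup>2 \<le> (\<Sum>r\<in>R. (mv M n d r)\<^sup>2)"
proof -
  obtain k U lam where "gram_eigenbasis R n M k U lam"
    using gram_eigenbasis_exists by blast
  then show ?thesis
    using assms unfolding dot_self_eq_vnorm2[symmetric] by (rule gram_eigenbasis.least_norm_preimage)
qed

section \<open>The trimmed norm\<close>

lemma block_norm_nonneg: "0 \<le> block_norm p z i"
  unfolding block_norm_def by (simp add: sum_nonneg)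

lemma block_norm_1: "block_norm 1 z = (\<lambda>i. \<bar>z i\<bar>)" "block_norm (Suc 0) z = (\<lambda>i. \<bar>z i\<bar>)"
  unfolding block_norm_def by (simp_all add: fun_eq_iff)

lemma block_norm_scale:
  assumes "\<And>r. r < p \<Longrightarrow> z' (i * p + r) = s * z (i * p + r)" "0 \<le> s"
  shows "block_norm p z' i = s * block_norm p z i"
proof -
  have "(\<Sum>r<p. (z' (i * p + r))\<^sup>2) = s\<^sup>2 * (\<Sum>r<p. (z (i * p + r))\<^sup>2)"
    using assms(1) by (simp add: sum_distrib_left power_mult_distrib)
  then show ?thesis
    unfolding block_norm_def using assms(2) by (simp add: real_sqrt_mult)
qed

lemma finite_index_sets: "finite {\<Lambda>. \<Lambda> \<subseteq> {..<m} \<and> card \<Lambda> = m - K}"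
  by (rule finite_subset[of _ "Pow {..<m}"]) auto

lemma trimmed_attained:
  "\<exists>\<Lambda>. \<Lambda> \<subseteq> {..<m} \<and> card \<Lambda> = m - K \<and> trimmed K m p z = (\<Sum>i\<in>\<Lambda>. block_norm p z i)"
proof -
  have "{..<m - K} \<in> {\<Lambda>. \<Lambda> \<subseteq> {..<m} \<and> card \<Lambda> = m - K}"
    by auto
  then have "{\<Lambda>. \<Lambda> \<subseteq> {..<m} \<and> card \<Lambda> = m - K} \<noteq> {}"
    by blast
  then have "trimmed K m p z \<in> (\<lambda>\<Lambda>. \<Sum>i\<in>\<Lambda>. block_norm p z i) ` {\<Lambda>. \<Lambda> \<subseteq> {..<m} \<and> card \<Lambda> = m - K}"
    unfolding trimmed_def using finite_index_sets by (intro Min_in) auto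
  then show ?thesis
    by (auto simp: image_iff)
qed

lemma trimmed_le:
  assumes "\<Lambda> \<subseteq> {..<m}" "card \<Lambda> = m - K"
  shows "trimmed K m p z \<le> (\<Sum>i\<in>\<Lambda>. block_norm p z i)"
  unfolding trimmed_def using assms finite_index_sets by (intro Min_le) auto

lemma trimmed_nonneg: "0 \<le> trimmed K m p z"
proof -
  obtain \<Lambda> where "trimmed K m p z = (\<Sum>i\<in>\<Lambda>. block_norm p z i)"
    using trimmed_attained by blast
  then show ?thesis
    by (simp add: sum_nonneg block_norm_nonneg)
qed

lemma trimmed_shrink:
  assumes \<Lambda>: "\<Lambda> \<subseteq> {..<m}" "card \<Lambda> = m - K" "trimmed K m p z = (\<Sum>i\<in>\<Lambda>. block_norm p z i)"
    and scaled: "\<And>i r. i \<in> \<Lambda> \<Longrightarrow> r < p \<Longrightarrow> z' (i * p + r) = s * z (i * p + r)"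
    and "0 \<le> s"
  shows "trimmed K m p z' \<le> s * trimmed K m p z"
proof -
  have "trimmed K m p z' \<le> (\<Sum>i\<in>\<Lambda>. block_norm p z' i)"
    using \<Lambda>(1,2) by (rule trimmed_le)
  also have "\<dots> = (\<Sum>i\<in>\<Lambda>. s * block_norm p z i)"
    using scaled \<open>0 \<le> s\<close> by (intro sum.cong refl block_norm_scale) auto
  finally show ?thesis
    using \<Lambda>(3) by (simp add: sum_distrib_left)
qed

lemma trimmed_scale_le:
  assumes "0 \<le> s"
  shows "trimmed K m p (\<lambda>i. s * z i) \<le> s * trimmed K m p z"
proof -
  obtain \<Lambda> where \<Lambda>: "\<Lambda> \<subseteq> {..<m}" "card \<Lambda> = m - K"
    "trimmed K m p z = (\<Sum>i\<in>\<Lambda>. block_norm p z i)"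
    using trimmed_attained by blast
  show ?thesis
    by (rule trimmed_shrink[OF \<Lambda>]) (use assms in simp_all)
qed

lemma trimmed_1_shrink_entry:
  assumes \<Lambda>: "\<Lambda> \<subseteq> {..<m}" "card \<Lambda> = m - K" "trimmed K m 1 z = (\<Sum>i\<in>\<Lambda>. \<bar>z i\<bar>)"
    and j: "j \<in> \<Lambda>" and t: "t \<le> 1"
  shows "trimmed K m 1 (z(j := (1 - t) * z j)) \<le> trimmed K m 1 z - t * \<bar>z j\<bar>"
proof -
  have fin: "finite \<Lambda>"
    using \<Lambda>(1) finite_subset by blast
  have "trimmed K m 1 (z(j := (1 - t) * z j)) \<le> (\<Sum>i\<in>\<Lambda>. \<bar>(z(j := (1 - t) * z j)) i\<bar>)"
    using trimmed_le[OF \<Lambda>(1,2), of 1 "z(j := (1 - t) * z j)"] by (simp add: block_norm_1)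
  also have "\<dots> = (1 - t) * \<bar>z j\<bar> + (\<Sum>i\<in>\<Lambda> - {j}. \<bar>z i\<bar>)"
    using t by (simp add: sum.remove[OF fin j] abs_mult)
  also have "(\<Sum>i\<in>\<Lambda> - {j}. \<bar>z i\<bar>) = (\<Sum>i\<in>\<Lambda>. \<bar>z i\<bar>) - \<bar>z j\<bar>"
    by (simp add: sum.remove[OF fin j])
  also have "(1 - t) * \<bar>z j\<bar> + ((\<Sum>i\<in>\<Lambda>. \<bar>z i\<bar>) - \<bar>z j\<bar>) = trimmed K m 1 z - t * \<bar>z j\<bar>"
    using \<Lambda>(3) by (simp add: algebra_simps)
  finally show ?thesis .
qed

lemma vnorm1_shrink_entry:
  assumes "j < n" "t \<le> 1"
  shows "vnorm1 n (x(j := (1 - t) * x j)) = vnorm1 n x - t * \<bar>x j\<bar>"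
proof -
  have "vnorm1 n (x(j := (1 - t) * x j)) = (1 - t) * \<bar>x j\<bar> + (\<Sum>i\<in>{..<n} - {j}. \<bar>x i\<bar>)"
    using assms unfolding vnorm1_def by (simp add: sum.remove[of _ j] abs_mult)
  also have "(\<Sum>i\<in>{..<n} - {j}. \<bar>x i\<bar>) = vnorm1 n x - \<bar>x j\<bar>"
    using assms unfolding vnorm1_def by (simp add: sum.remove[of _ j])
  also have "(1 - t) * \<bar>x j\<bar> + (vnorm1 n x - \<bar>x j\<bar>) = vnorm1 n x - t * \<bar>x j\<bar>"
    by (simp add: algebra_simps)
  finally show ?thesis .
qed

lemma vnorm1_scale: "0 \<le> s \<Longrightarrow> vnorm1 n (\<lambda>j. s * x j) = s * vnorm1 n x"
  unfolding vnorm1_def by (simp add: abs_mult sum_distrib_left)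

lemma finite_block_rows: "finite \<Lambda> \<Longrightarrow> finite (block_rows p \<Lambda>)"
proof -
  assume "finite \<Lambda>"
  moreover have "block_rows p \<Lambda> = (\<lambda>(i, r). i * p + r) ` (\<Lambda> \<times> {..<p})"
    unfolding block_rows_def by auto
  ultimately show ?thesis
    by simp
qed

lemma block_rows_mem: "i \<in> \<Lambda> \<Longrightarrow> r < p \<Longrightarrow> i * p + r \<in> block_rows p \<Lambda>"
  unfolding block_rows_def by auto

lemma block_rows_subset: "\<Lambda> \<subseteq> {..<m} \<Longrightarrow> block_rows p \<Lambda> \<subseteq> {..<m * p}"
proof
  fix x assume \<Lambda>: "\<Lambda> \<subseteq> {..<m}" and "x \<in> block_rows p \<Lambda>"
  then obtain i r where x: "x = i * p + r" "i \<in> \<Lambda>" "r < p"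
    unfolding block_rows_def by auto
  then have "Suc i * p \<le> m * p"
    using \<Lambda> by (intro mult_right_mono) auto
  then show "x \<in> {..<m * p}"
    using x by simp
qed

lemma block_rows_nonzero:
  assumes "(\<Sum>i\<in>\<Lambda>. block_norm p z i) \<noteq> 0"
  shows "\<exists>r\<in>block_rows p \<Lambda>. z r \<noteq> 0"
proof (rule ccontr)
  assume "\<not> (\<exists>r\<in>block_rows p \<Lambda>. z r \<noteq> 0)"
  then have "block_norm p z i = 0" if "i \<in> \<Lambda>" for i
    using block_rows_mem[OF that, of _ p] unfolding block_norm_def by simp
  then show False
    using assms by simp
qed

lemma sum_block_rows:
  assumes "finite \<Lambda>"
  shows "(\<Sum>r\<in>block_rows p \<Lambda>. (z r)\<^sup>2) = (\<Sum>i\<in>\<Lambda>. (block_norm p z i)\<^sup>2)"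
proof -
  have inj: "inj_on (\<lambda>(i, r). i * p + r) (\<Lambda> \<times> {..<p})"
  proof (rule inj_onI, clarsimp)
    fix i r i' r' assume "r < p" "r' < p" "i * p + r = i' * p + r'"
    then show "i = i' \<and> r = r'"
      by (metis add.commute div_mult_self1 div_less mod_mult_self1 mod_less add_0 less_zeroE)
  qed
  have img: "block_rows p \<Lambda> = (\<lambda>(i, r). i * p + r) ` (\<Lambda> \<times> {..<p})"
    unfolding block_rows_def by auto
  have "(\<Sum>r\<in>block_rows p \<Lambda>. (z r)\<^sup>2) = (\<Sum>(i, r)\<in>\<Lambda> \<times> {..<p}. (z (i * p + r))\<^sup>2)"
    unfolding img by (subst sum.reindex[OF inj]) (simp add: case_prod_unfold)
  also have "\<dots> = (\<Sum>i\<in>\<Lambda>. \<Sum>r<p. (z (i * p + r))\<^sup>2)"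
    by (rule sum.cartesian_product[symmetric])
  finally show ?thesis
    unfolding block_norm_def by (simp add: sum_nonneg)
qed

lemma sigmaK_least_norm_surjective:
  assumes "surjective_mat {..<m * p} n D" "mat_nonzero {..<m * p} n D"
    and R: "R \<subseteq> {..<m * p}"
  shows "0 < sigmaK K m p n D \<and>
    (\<exists>d. (\<forall>r\<in>R. mv D n d r = mv D n w r) \<and>
         (sigmaK K m p n D)\<^sup>2 * (vnorm2 n d)\<^sup>2 \<le> (\<Sum>r\<in>R. (mv D n w r)\<^sup>2))"
proof -
  have \<sigma>: "sigmaK K m p n D = sigma_min {..<m * p} n D"
    using assms(1) unfolding sigmaK_def by simp
  define y where "y r = (if r \<in> R then mv D n w r else 0)" for r
  obtain x where x: "\<forall>r\<in>{..<m * p}. mv D n x r = y r"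
    using assms(1) unfolding surjective_mat_def by blast
  obtain d where d: "\<forall>r\<in>{..<m * p}. mv D n d r = mv D n x r"
    and bound: "(sigma_min {..<m * p} n D)\<^sup>2 * (vnorm2 n d)\<^sup>2 \<le> (\<Sum>r\<in>{..<m * p}. (mv D n d r)\<^sup>2)"
    using least_norm_preimage[where R = "{..<m * p}" and n = n and M = D and x = x] by auto
  have "(\<Sum>r\<in>{..<m * p}. (mv D n d r)\<^sup>2) = (\<Sum>r\<in>{..<m * p}. (y r)\<^sup>2)"
    using d x by simp
  also have "\<dots> = (\<Sum>r\<in>R. (mv D n w r)\<^sup>2)"
    using R by (intro sum.mono_neutral_cong_right) (auto simp: y_def)
  finally have "(sigmaK K m p n D)\<^sup>2 * (vnorm2 n d)\<^sup>2 \<le> (\<Sum>r\<in>R. (mv D n w r)\<^sup>2)"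
    using bound \<sigma> by simp
  moreover have "\<forall>r\<in>R. mv D n d r = mv D n w r"
    using d x R by (auto simp: y_def)
  ultimately show ?thesis
    using sigma_min_pos[OF _ assms(2)] \<sigma> by auto
qed

lemma sigmaK_least_norm_not_surjective:
  assumes "\<not> surjective_mat {..<m * p} n D"
    and \<Lambda>: "\<Lambda> \<subseteq> {..<m}" "card \<Lambda> = m - K" and nz: "mat_nonzero (block_rows p \<Lambda>) n D"
  shows "0 < sigmaK K m p n D \<and>
    (\<exists>d. (\<forall>r\<in>block_rows p \<Lambda>. mv D n d r = mv D n w r) \<and>
         (sigmaK K m p n D)\<^sup>2 * (vnorm2 n d)\<^sup>2 \<le> (\<Sum>r\<in>block_rows p \<Lambda>. (mv D n w r)\<^sup>2))"
proof -
  define W where "W = {sigma_min (block_rows p \<Lambda>') n D | \<Lambda>'.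
    \<Lambda>' \<subseteq> {..<m} \<and> card \<Lambda>' = m - K \<and> mat_nonzero (block_rows p \<Lambda>') n D}"
  have \<sigma>: "sigmaK K m p n D = Min W"
    using assms(1) unfolding sigmaK_def W_def by simp
  have fin: "finite W"
    by (rule finite_subset[of _ "(\<lambda>\<Lambda>'. sigma_min (block_rows p \<Lambda>') n D) ` Pow {..<m}"])
       (auto simp: W_def)
  have fin_rows: "finite (block_rows p \<Lambda>')" if "\<Lambda>' \<subseteq> {..<m}" for \<Lambda>'
    using that by (intro finite_block_rows) (rule finite_subset, auto)
  have "\<forall>s\<in>W. 0 < s"
    unfolding W_def using sigma_min_pos fin_rows by blast
  moreover have mem: "sigma_min (block_rows p \<Lambda>) n D \<in> W"
    unfolding W_def using \<Lambda> nz by blast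
  ultimately have pos: "0 < sigmaK K m p n D"
    using Min_in[OF fin] \<sigma> by auto
  have le: "sigmaK K m p n D \<le> sigma_min (block_rows p \<Lambda>) n D"
    using \<sigma> fin mem by simp
  obtain d where d: "\<forall>r\<in>block_rows p \<Lambda>. mv D n d r = mv D n w r"
    and bound: "(sigma_min (block_rows p \<Lambda>) n D)\<^sup>2 * (vnorm2 n d)\<^sup>2 \<le> (\<Sum>r\<in>block_rows p \<Lambda>. (mv D n d r)\<^sup>2)"
    using least_norm_preimage[OF fin_rows[OF \<Lambda>(1)], where n = n and M = D and x = w] by auto
  have "(sigmaK K m p n D)\<^sup>2 * (vnorm2 n d)\<^sup>2 \<le> (sigma_min (block_rows p \<Lambda>) n D)\<^sup>2 * (vnorm2 n d)\<^sup>2"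
    using pos le by (intro mult_right_mono power_mono) auto
  then show ?thesis
    using pos d bound by auto
qed

lemma sigmaK_least_norm:
  assumes nz: "mat_nonzero {..<m * p} n D" and \<Lambda>: "\<Lambda> \<subseteq> {..<m}" "card \<Lambda> = m - K"
    and w: "mv D n w r \<noteq> 0" "r \<in> block_rows p \<Lambda>"
  shows "0 < sigmaK K m p n D \<and>
    (\<exists>d. (\<forall>r\<in>block_rows p \<Lambda>. mv D n d r = mv D n w r) \<and>
         (sigmaK K m p n D)\<^sup>2 * (vnorm2 n d)\<^sup>2 \<le> (\<Sum>r\<in>block_rows p \<Lambda>. (mv D n w r)\<^sup>2))"
proof (cases "surjective_mat {..<m * p} n D")
  case True
  then show ?thesis
    using sigmaK_least_norm_surjective[OF True nz block_rows_subset[OF \<Lambda>(1)]] by blast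
next
  case False
  have "mat_nonzero (block_rows p \<Lambda>) n D"
  proof (rule ccontr)
    assume "\<not> mat_nonzero (block_rows p \<Lambda>) n D"
    then have "mv D n w r = 0"
      using w(2) unfolding mat_nonzero_def mv_def by simp
    then show False
      using w(1) by simp
  qed
  then show ?thesis
    using sigmaK_least_norm_not_surjective[OF False \<Lambda>] by blast
qed

text \<open>The direction is a least-norm solution of \<open>D d = D (xbar - x)\<close> on the rows of an
  optimal block set of the trimmed norm.\<close>
lemma trimmed_descent_direction:
  assumes nz: "mat_nonzero {..<m * p} n D"
    and feasible: "\<forall>r<m * p. mv D n xbar r = c r"
    and T: "0 < trimmed K m p (\<lambda>i. mv D n x i - c i)"
  obtains d where "0 < sigmaK K m p n D"
    and "sigmaK K m p n D * vnorm2 n d \<le> trimmed K m p (\<lambda>i. mv D n x i - c i)"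
    and "\<And>t. 0 \<le> t \<Longrightarrow> t \<le> 1 \<Longrightarrow> trimmed K m p (\<lambda>i. mv D n (\<lambda>j. x j + t * d j) i - c i)
           \<le> (1 - t) * trimmed K m p (\<lambda>i. mv D n x i - c i)"
proof -
  define z where "z i = mv D n x i - c i" for i
  obtain \<Lambda> where \<Lambda>: "\<Lambda> \<subseteq> {..<m}" "card \<Lambda> = m - K" "trimmed K m p z = (\<Sum>i\<in>\<Lambda>. block_norm p z i)"
    using trimmed_attained by blast
  define Rw where "Rw = block_rows p \<Lambda>"
  define w where "w j = xbar j - x j" for j
  have zw: "mv D n w r = - z r" if "r \<in> Rw" for r
    using feasible block_rows_subset[OF \<Lambda>(1)] that unfolding w_def z_def Rw_def by (auto simp: mv_diff)
  have "(\<Sum>i\<in>\<Lambda>. block_norm p z i) \<noteq> 0"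
    using T \<Lambda>(3) unfolding z_def[symmetric] by simp
  then have "\<exists>r\<in>Rw. z r \<noteq> 0"
    unfolding Rw_def by (rule block_rows_nonzero)
  then obtain r where r: "r \<in> Rw" "mv D n w r \<noteq> 0"
    using zw by fastforce
  then obtain d where pos: "0 < sigmaK K m p n D" and d: "\<forall>r\<in>Rw. mv D n d r = mv D n w r"
    and bound: "(sigmaK K m p n D)\<^sup>2 * (vnorm2 n d)\<^sup>2 \<le> (\<Sum>r\<in>Rw. (mv D n w r)\<^sup>2)"
    using sigmaK_least_norm[OF nz \<Lambda>(1,2) r(2)] unfolding Rw_def by blast
  have "finite \<Lambda>"
    using \<Lambda>(1) finite_subset by blast
  then have "(\<Sum>r\<in>Rw. (mv D n w r)\<^sup>2) = (\<Sum>i\<in>\<Lambda>. (block_norm p z i)\<^sup>2)"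
    using zw unfolding Rw_def by (simp add: sum_block_rows[symmetric])
  then have "(sigmaK K m p n D * vnorm2 n d)\<^sup>2 \<le> (L2_set (block_norm p z) \<Lambda>)\<^sup>2"
    using bound unfolding L2_set_def by (simp add: power_mult_distrib sum_nonneg)
  then have "sigmaK K m p n D * vnorm2 n d \<le> L2_set (block_norm p z) \<Lambda>"
    by (rule power2_le_imp_le) simp
  also have "\<dots> \<le> trimmed K m p z"
    unfolding \<Lambda>(3) by (rule L2_set_le_sum) (rule block_norm_nonneg)
  finally have "sigmaK K m p n D * vnorm2 n d \<le> trimmed K m p z" .
  moreover have "trimmed K m p (\<lambda>i. mv D n (\<lambda>j. x j + t * d j) i - c i) \<le> (1 - t) * trimmed K m p z"
    if "0 \<le> t" "t \<le> 1" for t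
  proof (rule trimmed_shrink[OF \<Lambda>])
    fix i r assume "i \<in> \<Lambda>" "r < p"
    then have "i * p + r \<in> Rw"
      unfolding Rw_def by (rule block_rows_mem)
    then have md: "mv D n d (i * p + r) = c (i * p + r) - mv D n x (i * p + r)"
      using d zw by (simp add: z_def)
    show "mv D n (\<lambda>j. x j + t * d j) (i * p + r) - c (i * p + r) = (1 - t) * z (i * p + r)"
      unfolding mv_add mv_scale md z_def by (simp add: algebra_simps)
  qed (use that in simp)
  ultimately show ?thesis
    using that pos unfolding z_def by blast
qed

section \<open>First-order consequences of d-stationarity\<close>

lemma least_squares_increment:
  "(1/2) * (vnorm2 q (\<lambda>i. e i - t * s i))\<^sup>2 - (1/2) * (vnorm2 q e)\<^sup>2
    = t * (t * ((1/2) * dot q s s) - dot q e s)"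
  by (simp add: dot_self_eq_vnorm2[symmetric] dot_diff_left dot_diff_right dot_scale_left
      dot_scale_right dot_commute[of q s e] algebra_simps)

text \<open>Along a direction \<open>d\<close>, the least-squares term has one-sided derivative
  \<open>-\<langle>b - A x, A d\<rangle>\<close>.\<close>
lemma d_stationary_least_squares:
  fixes P :: "(nat \<Rightarrow> nat \<Rightarrow> real) \<Rightarrow> real"
  assumes stat: "d_stationary
      (\<lambda>x. (1/2) * (vnorm2 q (\<lambda>i. b i - (\<Sum>l\<in>I. mv (A l) (n l) (x l) i)))\<^sup>2 + P x) xs"
    and growth: "\<And>t. 0 < t \<Longrightarrow> t < 1 \<Longrightarrow> P (\<lambda>l j. xs l j + t * d l j) \<le> P xs + t * c"
  shows "dot q (\<lambda>i. b i - (\<Sum>l\<in>I. mv (A l) (n l) (xs l) i)) (\<lambda>i. \<Sum>l\<in>I. mv (A l) (n l) (d l) i) \<le> c"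
proof -
  define F where "F x = (1/2) * (vnorm2 q (\<lambda>i. b i - (\<Sum>l\<in>I. mv (A l) (n l) (x l) i)))\<^sup>2 + P x" for x
  define e where "e i = b i - (\<Sum>l\<in>I. mv (A l) (n l) (xs l) i)" for i
  define s where "s i = (\<Sum>l\<in>I. mv (A l) (n l) (d l) i)" for i
  obtain D where D: "((\<lambda>t. (F (\<lambda>l j. xs l j + t * d l j) - F xs) / t) \<longlongrightarrow> D) (at_right 0)" "0 \<le> D"
    using stat unfolding d_stationary_def F_def by blast
  have quotient: "(F (\<lambda>l j. xs l j + t * d l j) - F xs) / t \<le> (c - dot q e s) + t * ((1/2) * dot q s s)"
    if t: "0 < t" "t < 1" for t
  proof -
    have "(\<lambda>i. b i - (\<Sum>l\<in>I. mv (A l) (n l) (\<lambda>j. xs l j + t * d l j) i)) = (\<lambda>i. e i - t * s i)"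
      unfolding e_def s_def by (simp add: mv_add mv_scale sum.distrib sum_distrib_left algebra_simps)
    then have "F (\<lambda>l j. xs l j + t * d l j) - F xs
        = t * (t * ((1/2) * dot q s s) - dot q e s) + (P (\<lambda>l j. xs l j + t * d l j) - P xs)"
      unfolding F_def e_def[symmetric] least_squares_increment[symmetric] by simp
    also have "\<dots> \<le> ((c - dot q e s) + t * ((1/2) * dot q s s)) * t"
      using growth[OF t] by (simp add: algebra_simps)
    finally show ?thesis
      using t(1) by (simp only: pos_divide_le_eq)
  qed
  have "((\<lambda>t. (c - dot q e s) + t * ((1/2) * dot q s s)) \<longlongrightarrow> (c - dot q e s) + 0 * ((1/2) * dot q s s))
      (at_right 0)"
    by (intro tendsto_intros)
  then have lim: "((\<lambda>t. (c - dot q e s) + t * ((1/2) * dot q s s)) \<longlongrightarrow> c - dot q e s) (at_right 0)"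
    by (simp only: mult_zero_left add_0_right)
  have "D \<le> c - dot q e s"
  proof (rule tendsto_le[OF trivial_limit_at_right_real lim D(1)])
    show "\<forall>\<^sub>F t in at_right 0. (F (\<lambda>l j. xs l j + t * d l j) - F xs) / t
        \<le> (c - dot q e s) + t * ((1/2) * dot q s s)"
    proof (rule eventually_at_rightI[of 0 1])
      fix t :: real assume "t \<in> {0<..<1}"
      then show "(F (\<lambda>l j. xs l j + t * d l j) - F xs) / t \<le> (c - dot q e s) + t * ((1/2) * dot q s s)"
        by (intro quotient) auto
    qed simp
  qed
  then show ?thesis
    using D(2) unfolding e_def s_def by simp
qed

text \<open>Stationarity along \<open>xbar - xs\<close> gives \<open>\<langle>e, e - u\<rangle> \<le> 0\<close> for the two residuals \<open>e\<close>
  and \<open>u\<close>, hence \<open>\<parallel>e\<parallel> \<le> \<parallel>u\<parallel>\<close> by Cauchy-Schwarz.\<close>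
lemma d_stationary_residual_bound:
  fixes P :: "(nat \<Rightarrow> nat \<Rightarrow> real) \<Rightarrow> real"
  assumes stat: "d_stationary
      (\<lambda>x. (1/2) * (vnorm2 q (\<lambda>i. b i - (\<Sum>l\<in>I. mv (A l) (n l) (x l) i)))\<^sup>2 + P x) xs"
    and shrink: "\<And>t. 0 < t \<Longrightarrow> t < 1 \<Longrightarrow> P (\<lambda>l j. xs l j + t * (xbar l j - xs l j)) \<le> (1 - t) * P xs"
    and "0 \<le> P xs"
  shows "vnorm2 q (\<lambda>i. b i - (\<Sum>l\<in>I. mv (A l) (n l) (xs l) i))
      \<le> vnorm2 q (\<lambda>i. b i - (\<Sum>l\<in>I. mv (A l) (n l) (xbar l) i))"
proof -
  define e where "e i = b i - (\<Sum>l\<in>I. mv (A l) (n l) (xs l) i)" for i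
  define u where "u i = b i - (\<Sum>l\<in>I. mv (A l) (n l) (xbar l) i)" for i
  have "P (\<lambda>l j. xs l j + t * (xbar l j - xs l j)) \<le> P xs + t * 0" if "0 < t" "t < 1" for t
  proof -
    have "0 \<le> t * P xs"
      using that \<open>0 \<le> P xs\<close> by simp
    then show ?thesis
      using shrink[OF that] left_diff_distrib[of 1 t "P xs"] by linarith
  qed
  then have "dot q e (\<lambda>i. \<Sum>l\<in>I. mv (A l) (n l) (\<lambda>j. xbar l j - xs l j) i) \<le> 0"
    unfolding e_def by (rule d_stationary_least_squares[OF stat])
  moreover have "(\<lambda>i. \<Sum>l\<in>I. mv (A l) (n l) (\<lambda>j. xbar l j - xs l j) i) = (\<lambda>i. e i - u i)"
    unfolding e_def u_def by (simp add: mv_diff sum_subtractf)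
  ultimately have "dot q e e \<le> dot q e u"
    by (simp add: dot_diff_right)
  also have "\<dots> \<le> \<bar>dot q e u\<bar>"
    by (rule abs_ge_self)
  also have "\<dots> \<le> vnorm2 q e * vnorm2 q u"
    by (rule abs_dot_le_vnorm2)
  finally have "vnorm2 q e * vnorm2 q e \<le> vnorm2 q e * vnorm2 q u"
    by (simp add: dot_self_eq_vnorm2 power2_eq_square)
  then show ?thesis
    unfolding e_def[symmetric] u_def[symmetric]
    using vnorm2_nonneg[of q e] vnorm2_nonneg[of q u]
    by (cases "vnorm2 q e = 0") (auto intro: mult_left_le_imp_le)
qed

lemma sum_fun_upd_le:
  fixes g :: "nat \<Rightarrow> 'a \<Rightarrow> real"
  assumes "finite J" "l0 \<in> J" "g l0 y \<le> g l0 (x l0) - \<delta>"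
  shows "(\<Sum>l\<in>J. g l ((x(l0 := y)) l)) \<le> (\<Sum>l\<in>J. g l (x l)) - \<delta>"
proof -
  have "(\<Sum>l\<in>J - {l0}. g l ((x(l0 := y)) l)) = (\<Sum>l\<in>J - {l0}. g l (x l))"
    by (intro sum.cong) auto
  then show ?thesis
    using assms by (simp add: sum.remove[OF assms(1,2)])
qed

lemma d_stationary_single_block:
  fixes g :: "nat \<Rightarrow> (nat \<Rightarrow> real) \<Rightarrow> real"
  assumes stat: "d_stationary
      (\<lambda>x. (1/2) * (vnorm2 q (\<lambda>i. b i - (\<Sum>l\<in>I. mv (A l) (n l) (x l) i)))\<^sup>2 + (\<Sum>l\<in>J. g l (x l))) xs"
    and I: "finite I" "l0 \<in> I" and J: "finite J" "l0 \<in> J"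
    and decrease: "\<And>t. 0 < t \<Longrightarrow> t < 1 \<Longrightarrow> g l0 (\<lambda>j. xs l0 j + t * d j) \<le> g l0 (xs l0) - t * \<delta>"
  shows "\<delta> \<le> vnorm2 q (\<lambda>i. b i - (\<Sum>l\<in>I. mv (A l) (n l) (xs l) i)) * vnorm2 q (mv (A l0) (n l0) d)"
proof -
  define dd where "dd l = (if l = l0 then d else (\<lambda>_. 0))" for l
  have upd: "(\<lambda>j. xs l j + t * dd l j) = (xs(l0 := (\<lambda>j. xs l0 j + t * d j))) l" for l t
    unfolding dd_def by (auto simp: fun_eq_iff)
  have "(\<Sum>l\<in>J. g l (\<lambda>j. xs l j + t * dd l j)) \<le> (\<Sum>l\<in>J. g l (xs l)) + t * (- \<delta>)"
    if "0 < t" "t < 1" for t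
    unfolding upd using sum_fun_upd_le[where g = g and x = xs, OF J decrease[OF that]] by simp
  then have "dot q (\<lambda>i. b i - (\<Sum>l\<in>I. mv (A l) (n l) (xs l) i)) (\<lambda>i. \<Sum>l\<in>I. mv (A l) (n l) (dd l) i) \<le> - \<delta>"
    by (rule d_stationary_least_squares[OF stat])
  moreover have "(\<lambda>i. \<Sum>l\<in>I. mv (A l) (n l) (dd l) i) = mv (A l0) (n l0) d"
  proof
    fix i
    have "mv (A l) (n l) (dd l) i = (if l = l0 then mv (A l0) (n l0) d i else 0)" for l
      unfolding dd_def mv_def by simp
    then show "(\<Sum>l\<in>I. mv (A l) (n l) (dd l) i) = mv (A l0) (n l0) d i"
      using I by simp
  qed
  ultimately have "dot q (\<lambda>i. b i - (\<Sum>l\<in>I. mv (A l) (n l) (xs l) i)) (mv (A l0) (n l0) d) \<le> - \<delta>"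
    by simp
  then show ?thesis
    using abs_dot_le_vnorm2[of q "\<lambda>i. b i - (\<Sum>l\<in>I. mv (A l) (n l) (xs l) i)" "mv (A l0) (n l0) d"]
    by linarith
qed

section \<open>Exactness of the trimmed penalties\<close>

lemma trimmed_towards_feasible:
  assumes feasible: "\<forall>r<m * p. mv D n xbar r = c r" and "t \<le> 1"
  shows "trimmed K m p (\<lambda>i. mv D n (\<lambda>j. x j + t * (xbar j - x j)) i - c i)
    \<le> (1 - t) * trimmed K m p (\<lambda>i. mv D n x i - c i)"
proof -
  obtain \<Lambda> where \<Lambda>: "\<Lambda> \<subseteq> {..<m}" "card \<Lambda> = m - K"
    "trimmed K m p (\<lambda>i. mv D n x i - c i) = (\<Sum>i\<in>\<Lambda>. block_norm p (\<lambda>i. mv D n x i - c i) i)"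
    using trimmed_attained by blast
  show ?thesis
  proof (rule trimmed_shrink[OF \<Lambda>])
    fix i r assume "i \<in> \<Lambda>" "r < p"
    then have "i * p + r < m * p"
      using block_rows_subset[OF \<Lambda>(1)] block_rows_mem by blast
    then show "mv D n (\<lambda>j. x j + t * (xbar j - x j)) (i * p + r) - c (i * p + r)
        = (1 - t) * (mv D n x (i * p + r) - c (i * p + r))"
      using feasible by (simp add: mv_add mv_scale mv_diff algebra_simps)
  qed (use assms(2) in simp)
qed

lemma d_stationary_trimmed_residual_bound:
  assumes stat: "d_stationary
       (\<lambda>x. (1/2) * (vnorm2 q (\<lambda>i. b i - (\<Sum>l\<in>I. mv (A l) (n l) (x l) i)))\<^sup>2
            + (\<Sum>l\<in>J. \<gamma> l * trimmed (K l) (m l) (p l) (\<lambda>i. mv (D l) (n l) (x l) i - c l i)))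
       xs"
    and \<gamma>: "\<And>l. l \<in> J \<Longrightarrow> 0 \<le> \<gamma> l"
    and feasible: "\<And>l. l \<in> J \<Longrightarrow> \<forall>r<m l * p l. mv (D l) (n l) (xbar l) r = c l r"
  shows "vnorm2 q (\<lambda>i. b i - (\<Sum>l\<in>I. mv (A l) (n l) (xs l) i))
      \<le> vnorm2 q (\<lambda>i. b i - (\<Sum>l\<in>I. mv (A l) (n l) (xbar l) i))"
proof (rule d_stationary_residual_bound[OF stat])
  fix t :: real assume "0 < t" "t < 1"
  then show "(\<Sum>l\<in>J. \<gamma> l * trimmed (K l) (m l) (p l)
               (\<lambda>i. mv (D l) (n l) (\<lambda>j. xs l j + t * (xbar l j - xs l j)) i - c l i))
    \<le> (1 - t) * (\<Sum>l\<in>J. \<gamma> l * trimmed (K l) (m l) (p l) (\<lambda>i. mv (D l) (n l) (xs l) i - c l i))"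
    unfolding sum_distrib_left using trimmed_towards_feasible[OF feasible] \<gamma>
    by (intro sum_mono) (simp add: mult_left_mono mult.left_commute)
qed (use \<gamma> in \<open>simp add: sum_nonneg trimmed_nonneg\<close>)

lemma d_stationary_trimmed_least_squares_exact:
  fixes L l0 :: nat and n m p K :: "nat \<Rightarrow> nat" and \<gamma> :: "nat \<Rightarrow> real"
    and A D :: "nat \<Rightarrow> nat \<Rightarrow> nat \<Rightarrow> real" and c xbar xs :: "nat \<Rightarrow> nat \<Rightarrow> real"
  assumes \<gamma>_pos: "\<And>l. l \<in> {1..L} \<Longrightarrow> 0 < \<gamma> l"
    and D_nonzero: "\<And>l. l \<in> {1..L} \<Longrightarrow> mat_nonzero {..<m l * p l} (n l) (D l)"
    and feasible: "\<And>l. l \<in> {1..L} \<Longrightarrow> \<forall>r<m l * p l. mv (D l) (n l) (xbar l) r = c l r"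
    and \<gamma>_large: "\<And>l. l \<in> {1..L} \<Longrightarrow> \<gamma> l > (1 / sigmaK (K l) (m l) (p l) (n l) (D l))
      * spec_norm {..<q} (n l) (A l) * vnorm2 q (\<lambda>i. b i - (\<Sum>k\<in>{1..L}. mv (A k) (n k) (xbar k) i))"
    and stat: "d_stationary
       (\<lambda>x. (1/2) * (vnorm2 q (\<lambda>i. b i - (\<Sum>l\<le>L. mv (A l) (n l) (x l) i)))\<^sup>2
            + (\<Sum>l\<in>{1..L}. \<gamma> l * trimmed (K l) (m l) (p l) (\<lambda>i. mv (D l) (n l) (x l) i - c l i)))
       xs"
    and l0: "l0 \<in> {1..L}"
  shows "trimmed (K l0) (m l0) (p l0) (\<lambda>i. mv (D l0) (n l0) (xs l0) i - c l0 i) = 0"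
proof (rule ccontr)
  define T where "T = trimmed (K l0) (m l0) (p l0) (\<lambda>i. mv (D l0) (n l0) (xs l0) i - c l0 i)"
  define \<sigma> where "\<sigma> = sigmaK (K l0) (m l0) (p l0) (n l0) (D l0)"
  define s where "s = spec_norm {..<q} (n l0) (A l0)"
  define e where "e i = b i - (\<Sum>l\<le>L. mv (A l) (n l) (xs l) i)" for i
  define u where "u i = b i - (\<Sum>k\<in>{1..L}. mv (A k) (n k) (xbar k) i)" for i
  assume "T \<noteq> 0"
  then have T_pos: "0 < T"
    using trimmed_nonneg unfolding T_def by (metis order_less_le)
  \<comment> \<open>\<open>x\<^sub>0\<close> carries no penalty, so we compare with the point \<open>(0, x\<^sub>1, \<dots>, x\<^sub>L)\<close>.\<close>
  have "{..L} = insert 0 {1..L}"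
    by auto
  then have "(\<Sum>l\<le>L. mv (A l) (n l) ((xbar(0 := (\<lambda>_. 0))) l) i) = (\<Sum>k\<in>{1..L}. mv (A k) (n k) (xbar k) i)"
    for i by (simp add: mv_zero)
  then have residual: "vnorm2 q e \<le> vnorm2 q u"
    using d_stationary_trimmed_residual_bound[OF stat, where xbar = "xbar(0 := (\<lambda>_. 0))"] \<gamma>_pos feasible
    unfolding e_def u_def by (simp add: less_imp_le)
  obtain d where \<sigma>_pos: "0 < \<sigma>" and d_len: "\<sigma> * vnorm2 (n l0) d \<le> T"
    and descent: "\<And>t. 0 \<le> t \<Longrightarrow> t \<le> 1 \<Longrightarrow>
      trimmed (K l0) (m l0) (p l0) (\<lambda>i. mv (D l0) (n l0) (\<lambda>j. xs l0 j + t * d j) i - c l0 i) \<le> (1 - t) * T"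
    using trimmed_descent_direction[OF D_nonzero[OF l0] feasible[OF l0] T_pos[unfolded T_def]]
    unfolding \<sigma>_def T_def by blast
  have "\<gamma> l0 * T \<le> vnorm2 q e * vnorm2 q (mv (A l0) (n l0) d)"
    unfolding e_def
  proof (rule d_stationary_single_block[OF stat _ _ _ l0])
    fix t :: real assume "0 < t" "t < 1"
    then show "\<gamma> l0 * trimmed (K l0) (m l0) (p l0) (\<lambda>i. mv (D l0) (n l0) (\<lambda>j. xs l0 j + t * d j) i - c l0 i)
        \<le> \<gamma> l0 * trimmed (K l0) (m l0) (p l0) (\<lambda>i. mv (D l0) (n l0) (xs l0) i - c l0 i) - t * (\<gamma> l0 * T)"
      using mult_left_mono[OF descent less_imp_le[OF \<gamma>_pos[OF l0]]] unfolding T_def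
      by (simp add: algebra_simps)
  qed (use l0 in auto)
  also have "\<dots> \<le> vnorm2 q u * (s * vnorm2 (n l0) d)"
    using residual vnorm2_mv_le_spec_norm[of "n l0" q "A l0" d] D_nonzero[OF l0]
    unfolding s_def mat_nonzero_def by (intro mult_mono) (auto simp: vnorm2_nonneg)
  finally have "\<sigma> * (\<gamma> l0 * T) \<le> vnorm2 q u * s * (\<sigma> * vnorm2 (n l0) d)"
    using \<sigma>_pos by (simp add: mult_ac)
  also have "\<dots> \<le> vnorm2 q u * s * T"
    using d_len spec_norm_nonneg D_nonzero[OF l0]
    by (intro mult_left_mono) (auto simp: s_def mat_nonzero_def vnorm2_nonneg)
  finally have "\<sigma> * \<gamma> l0 \<le> vnorm2 q u * s"
    using T_pos by (simp add: mult.assoc)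
  moreover have "vnorm2 q u * s < \<sigma> * \<gamma> l0"
    using \<gamma>_large[OF l0] \<sigma>_pos unfolding \<sigma>_def[symmetric] s_def[symmetric] u_def[symmetric]
    by (simp add: field_simps)
  ultimately show False
    by simp
qed

lemma lasso_penalty_scale:
  assumes "0 \<le> \<eta>" "0 \<le> \<gamma>" "0 \<le> s"
  shows "\<eta> * vnorm1 n (\<lambda>j. s * x j) + \<gamma> * trimmed K n 1 (\<lambda>j. s * x j)
    \<le> s * (\<eta> * vnorm1 n x + \<gamma> * trimmed K n 1 x)"
  using assms mult_left_mono[OF trimmed_scale_le[OF assms(3), of K n 1 x] assms(2)]
  by (simp add: vnorm1_scale algebra_simps)

lemma lasso_penalty_shrink_entry:
  assumes \<Lambda>: "\<Lambda> \<subseteq> {..<n}" "card \<Lambda> = n - K" "trimmed K n 1 x = (\<Sum>i\<in>\<Lambda>. \<bar>x i\<bar>)"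
    and j: "j \<in> \<Lambda>" and "0 \<le> \<gamma>" "t \<le> 1"
  shows "\<eta> * vnorm1 n (x(j := (1 - t) * x j)) + \<gamma> * trimmed K n 1 (x(j := (1 - t) * x j))
    \<le> \<eta> * vnorm1 n x + \<gamma> * trimmed K n 1 x - t * ((\<eta> + \<gamma>) * \<bar>x j\<bar>)"
proof -
  have "j < n"
    using \<Lambda>(1) j by auto
  then have "vnorm1 n (x(j := (1 - t) * x j)) = vnorm1 n x - t * \<bar>x j\<bar>"
    using assms(6) by (rule vnorm1_shrink_entry)
  then have "\<eta> * vnorm1 n (x(j := (1 - t) * x j)) = \<eta> * vnorm1 n x - \<eta> * (t * \<bar>x j\<bar>)"
    by (simp add: right_diff_distrib)
  moreover have "\<gamma> * trimmed K n 1 (x(j := (1 - t) * x j)) \<le> \<gamma> * (trimmed K n 1 x - t * \<bar>x j\<bar>)"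
    using trimmed_1_shrink_entry[OF \<Lambda> j assms(6)] assms(5) by (rule mult_left_mono)
  moreover have "t * ((\<eta> + \<gamma>) * \<bar>x j\<bar>) = \<eta> * (t * \<bar>x j\<bar>) + \<gamma> * (t * \<bar>x j\<bar>)"
    by (simp add: algebra_simps)
  ultimately show ?thesis
    by (simp add: right_diff_distrib)
qed

lemma d_stationary_lasso_residual_bound:
  assumes stat: "d_stationary
       (\<lambda>x. (1/2) * (vnorm2 q (\<lambda>i. b i - (\<Sum>l\<in>I. mv (A l) (n l) (x l) i)))\<^sup>2
            + (\<Sum>l\<in>J. \<eta> l * vnorm1 (n l) (x l) + \<gamma> l * trimmed (K l) (n l) 1 (x l)))
       xs"
    and \<eta>: "\<And>l. l \<in> J \<Longrightarrow> 0 \<le> \<eta> l" and \<gamma>: "\<And>l. l \<in> J \<Longrightarrow> 0 \<le> \<gamma> l"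
  shows "vnorm2 q (\<lambda>i. b i - (\<Sum>l\<in>I. mv (A l) (n l) (xs l) i)) \<le> vnorm2 q b"
proof -
  have "vnorm2 q (\<lambda>i. b i - (\<Sum>l\<in>I. mv (A l) (n l) (xs l) i))
      \<le> vnorm2 q (\<lambda>i. b i - (\<Sum>l\<in>I. mv (A l) (n l) ((\<lambda>_ _. 0) l) i))"
  proof (rule d_stationary_residual_bound[OF stat])
    fix t :: real assume "0 < t" "t < 1"
    have "(\<lambda>j. xs l j + t * ((\<lambda>_ _. 0) l j - xs l j)) = (\<lambda>j. (1 - t) * xs l j)" for l
      by (simp add: fun_eq_iff algebra_simps)
    then show "(\<Sum>l\<in>J. \<eta> l * vnorm1 (n l) (\<lambda>j. xs l j + t * ((\<lambda>_ _. 0) l j - xs l j))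
          + \<gamma> l * trimmed (K l) (n l) 1 (\<lambda>j. xs l j + t * ((\<lambda>_ _. 0) l j - xs l j)))
        \<le> (1 - t) * (\<Sum>l\<in>J. \<eta> l * vnorm1 (n l) (xs l) + \<gamma> l * trimmed (K l) (n l) 1 (xs l))"
      unfolding sum_distrib_left using lasso_penalty_scale[OF \<eta> \<gamma>, of _ _ "1 - t"] \<open>t < 1\<close>
      by (intro sum_mono) simp
  next
    show "0 \<le> (\<Sum>l\<in>J. \<eta> l * vnorm1 (n l) (xs l) + \<gamma> l * trimmed (K l) (n l) 1 (xs l))"
      using \<gamma> \<eta> by (intro sum_nonneg add_nonneg_nonneg mult_nonneg_nonneg trimmed_nonneg)
        (simp_all add: vnorm1_def sum_nonneg)
  qed
  then show ?thesis
    by (simp add: mv_zero)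
qed

lemma d_stationary_trimmed_lasso_exact:
  fixes L l0 :: nat and n K :: "nat \<Rightarrow> nat" and \<gamma> \<eta> :: "nat \<Rightarrow> real"
    and A :: "nat \<Rightarrow> nat \<Rightarrow> nat \<Rightarrow> real" and xs :: "nat \<Rightarrow> nat \<Rightarrow> real"
  assumes \<gamma>_pos: "\<And>l. l \<in> {1..L} \<Longrightarrow> 0 < \<gamma> l" and \<eta>_nonneg: "\<And>l. l \<in> {1..L} \<Longrightarrow> 0 \<le> \<eta> l"
    and \<gamma>_large: "\<And>l. l \<in> {1..L} \<Longrightarrow>
      \<gamma> l > Max ((\<lambda>j. vnorm2 q (\<lambda>i. A l i j)) ` {..<n l}) * vnorm2 q b - \<eta> l"
    and stat: "d_stationary
       (\<lambda>x. (1/2) * (vnorm2 q (\<lambda>i. b i - (\<Sum>l\<in>{1..L}. mv (A l) (n l) (x l) i)))\<^sup>2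
            + (\<Sum>l\<in>{1..L}. \<eta> l * vnorm1 (n l) (x l))
            + (\<Sum>l\<in>{1..L}. \<gamma> l * trimmed (K l) (n l) 1 (x l)))
       xs"
    and l0: "l0 \<in> {1..L}"
  shows "trimmed (K l0) (n l0) 1 (xs l0) = 0"
proof (rule ccontr)
  define g where "g l v = \<eta> l * vnorm1 (n l) v + \<gamma> l * trimmed (K l) (n l) 1 v" for l v
  define e where "e i = b i - (\<Sum>l\<in>{1..L}. mv (A l) (n l) (xs l) i)" for i
  define M where "M = Max ((\<lambda>j. vnorm2 q (\<lambda>i. A l0 i j)) ` {..<n l0})"
  have stat_sum: "d_stationary (\<lambda>x. (1/2) * (vnorm2 q (\<lambda>i. b i - (\<Sum>l\<in>{1..L}. mv (A l) (n l) (x l) i)))\<^sup>2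
      + (\<Sum>l\<in>{1..L}. \<eta> l * vnorm1 (n l) (x l) + \<gamma> l * trimmed (K l) (n l) 1 (x l))) xs"
    using stat unfolding sum.distrib add.assoc .
  then have stat': "d_stationary (\<lambda>x. (1/2) * (vnorm2 q (\<lambda>i. b i - (\<Sum>l\<in>{1..L}. mv (A l) (n l) (x l) i)))\<^sup>2
      + (\<Sum>l\<in>{1..L}. g l (x l))) xs"
    unfolding g_def .
  have residual: "vnorm2 q e \<le> vnorm2 q b"
    unfolding e_def using \<gamma>_pos \<eta>_nonneg
    by (intro d_stationary_lasso_residual_bound[OF stat_sum]) (simp_all add: less_imp_le)
  assume "trimmed (K l0) (n l0) 1 (xs l0) \<noteq> 0"
  then have "0 < trimmed (K l0) (n l0) 1 (xs l0)"
    using trimmed_nonneg by (metis order_less_le)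
  moreover obtain \<Lambda> where \<Lambda>: "\<Lambda> \<subseteq> {..<n l0}" "card \<Lambda> = n l0 - K l0"
    "trimmed (K l0) (n l0) 1 (xs l0) = (\<Sum>i\<in>\<Lambda>. \<bar>xs l0 i\<bar>)"
    using trimmed_attained[of "n l0" "K l0" 1 "xs l0"] by (auto simp: block_norm_1)
  ultimately obtain j where j: "j \<in> \<Lambda>" "xs l0 j \<noteq> 0"
    by (metis abs_zero less_irrefl sum.neutral)
  define a where "a = xs l0 j"
  define d where "d i = (if i = j then - a else 0)" for i
  have "(\<eta> l0 + \<gamma> l0) * \<bar>a\<bar> \<le> vnorm2 q e * vnorm2 q (mv (A l0) (n l0) d)"
    unfolding e_def
  proof (rule d_stationary_single_block[OF stat' _ _ _ l0])
    fix t :: real assume "0 < t" "t < 1"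
    moreover have "(\<lambda>i. xs l0 i + t * d i) = (xs l0)(j := (1 - t) * xs l0 j)"
      unfolding d_def a_def by (auto simp: fun_eq_iff algebra_simps)
    ultimately show "g l0 (\<lambda>i. xs l0 i + t * d i) \<le> g l0 (xs l0) - t * ((\<eta> l0 + \<gamma> l0) * \<bar>a\<bar>)"
      unfolding g_def a_def
      using lasso_penalty_shrink_entry[OF \<Lambda> j(1) less_imp_le[OF \<gamma>_pos[OF l0]]] by simp
  qed (use l0 in auto)
  also have "\<dots> \<le> vnorm2 q b * (\<bar>a\<bar> * M)"
  proof (rule mult_mono[OF residual _ vnorm2_nonneg vnorm2_nonneg])
    have "j < n l0"
      using j(1) \<Lambda>(1) by auto
    then have "mv (A l0) (n l0) d = (\<lambda>i. (- a) * A l0 i j)"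
      unfolding d_def by (simp add: fun_eq_iff mv_def if_distrib cong: if_cong)
    then have "vnorm2 q (mv (A l0) (n l0) d) = \<bar>a\<bar> * vnorm2 q (\<lambda>i. A l0 i j)"
      by (simp only: vnorm2_scale abs_minus_cancel)
    also have "\<dots> \<le> \<bar>a\<bar> * M"
      unfolding M_def using \<open>j < n l0\<close> by (intro mult_left_mono Max_ge) auto
    finally show "vnorm2 q (mv (A l0) (n l0) d) \<le> \<bar>a\<bar> * M" .
  qed
  finally have "(\<eta> l0 + \<gamma> l0) * \<bar>a\<bar> \<le> (M * vnorm2 q b) * \<bar>a\<bar>"
    by (simp add: mult_ac)
  then have "\<eta> l0 + \<gamma> l0 \<le> M * vnorm2 q b"
    by (rule mult_right_le_imp_le) (use j(2) in \<open>simp add: a_def\<close>)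
  then show False
    using \<gamma>_large[OF l0] unfolding M_def by simp
qed

theorem mainTheorem7:
  fixes L :: nat and n :: "nat \<Rightarrow> nat" and \<gamma> :: "nat \<Rightarrow> real" and K :: "nat \<Rightarrow> nat"
  shows
  "(\<forall>(m :: nat \<Rightarrow> nat) (p :: nat \<Rightarrow> nat) (D :: nat \<Rightarrow> nat \<Rightarrow> nat \<Rightarrow> real)
       (c :: nat \<Rightarrow> nat \<Rightarrow> real) (xbar :: nat \<Rightarrow> nat \<Rightarrow> real) (q :: nat)
       (A :: nat \<Rightarrow> nat \<Rightarrow> nat \<Rightarrow> real) (b :: nat \<Rightarrow> real) (xs :: nat \<Rightarrow> nat \<Rightarrow> real).
     (\<forall>l\<in>{1..L}. \<gamma> l > 0 \<and> K l < m l \<and> mat_nonzero {..<m l * p l} (n l) (D l)) \<longrightarrow>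
     (\<forall>l\<in>{1..L}. \<forall>r<m l * p l. mv (D l) (n l) (xbar l) r = c l r) \<longrightarrow>
     (\<forall>l\<in>{1..L}. \<gamma> l > (1 / sigmaK (K l) (m l) (p l) (n l) (D l)) * spec_norm {..<q} (n l) (A l)
                 * vnorm2 q (\<lambda>i. b i - (\<Sum>k\<in>{1..L}. mv (A k) (n k) (xbar k) i))) \<longrightarrow>
     d_stationary
       (\<lambda>x. (1/2) * (vnorm2 q (\<lambda>i. b i - (\<Sum>l\<le>L. mv (A l) (n l) (x l) i)))\<^sup>2
            + (\<Sum>l\<in>{1..L}. \<gamma> l * trimmed (K l) (m l) (p l) (\<lambda>i. mv (D l) (n l) (x l) i - c l i)))
       xs \<longrightarrow>
     (\<forall>l\<in>{1..L}. trimmed (K l) (m l) (p l) (\<lambda>i. mv (D l) (n l) (xs l) i - c l i) = 0))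
   \<and>
   (\<forall>(q :: nat) (A :: nat \<Rightarrow> nat \<Rightarrow> nat \<Rightarrow> real) (b :: nat \<Rightarrow> real) (\<eta> :: nat \<Rightarrow> real)
       (xs :: nat \<Rightarrow> nat \<Rightarrow> real).
     n 0 = 0 \<longrightarrow>
     (\<forall>l\<in>{1..L}. \<gamma> l > 0 \<and> K l < n l \<and> \<eta> l \<ge> 0) \<longrightarrow>
     (\<forall>l\<in>{1..L}. \<gamma> l > Max ((\<lambda>j. vnorm2 q (\<lambda>i. A l i j)) ` {..<n l}) * vnorm2 q b - \<eta> l) \<longrightarrow>
     d_stationary
       (\<lambda>x. (1/2) * (vnorm2 q (\<lambda>i. b i - (\<Sum>l\<in>{1..L}. mv (A l) (n l) (x l) i)))\<^sup>2
            + (\<Sum>l\<in>{1..L}. \<eta> l * vnorm1 (n l) (x l))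
            + (\<Sum>l\<in>{1..L}. \<gamma> l * trimmed (K l) (n l) 1 (x l)))
       xs \<longrightarrow>
     (\<forall>l\<in>{1..L}. trimmed (K l) (n l) 1 (xs l) = 0))"
  apply (intro conjI allI impI ballI)
  subgoal premises hyps for m p D c xbar q A b xs l
    by (rule d_stationary_trimmed_least_squares_exact[OF _ _ _ _ hyps(4,5)]) (use hyps(1-3) in auto)
  subgoal premises hyps for q A b \<eta> xs l
    by (rule d_stationary_trimmed_lasso_exact[OF _ _ _ hyps(4,5)]) (use hyps(2,3) in auto)
  done

end
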